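(* Let a domain $v$ be a triple $(\mu^{(v)}, f^{(v)}, g^{(v)})$ with $\mu^{(v)}$ a distribution on $\mathbb{R}^d$, $f^{(v)}:\mathbb{R}^d\to\mathbb{R}^{d'}$ and $g^{(v)}:\mathbb{R}^{d'}\to\mathcal{Y}$, and $h^{(v)}=g^{(v)}\circ f^{(v)}$. Let $u$ be the unseen domain and $s=1,\dots,S$ the seen domains. For $h=g\circ f$ define $R^{(v)}(h):=\mathbb{E}_{\bm{x}\sim\mu^{(v)}}[\ell(h(\bm{x}),h^{(v)}(\bm{x}))]$. Assume (i) $\ell$ is non-negative, symmetric, bounded by a finite positive number $L$, and satisfies the triangle inequality; (ii) $f$ is invertible when restricted to the data manifold (the support of the input distributions); and (iii) the pushforwards $f_{\#}\mu^{(s)}$, $s=1,\dots,S$, and $f_{\#}\mu^{(u)}$ are all $(c_1,c_2)$-regular (absolutely continuous with differentiable density $p$ satisfying $\|\nabla\log_2 p(\bm{x})\|_2\le c_1\|\bm{x}\|_2+c_2$). Let $\lambda^{(1)},\dots,\lambda^{(S)}$ be convex weights, $\sigma^{(u,s)}:=\min\{\mathbb{E}_{\bm{x}\sim\mu^{(u)}}[\ell(h^{(u)}(\bm{x}),h^{(s)}(\bm{x}))],\ \mathbb{E}_{\bm{x}\sim\mu^{(s)}}[\ell(h^{(u)}(\bm{x}),h^{(s)}(\bm{x}))]\}$, and $C=\max_s\sqrt{c_1(\sqrt{\mathbb{E}_{\bm{x}\sim\mu^{(u)}}[\|f(\bm{x})\|^2]}+\sqrt{\mathbb{E}_{\bm{x}\sim\mu^{(s)}}[\|f(\bm{x})\|^2]})+2c_2}$.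 Then for an arbitrary pushforward distribution $f_{\#}\mu$ and any such hypothesis $h=g\circ f$, \[ R^{(u)}(h)\le\sum_{s=1}^S\lambda^{(s)}R^{(s)}(h)+LC\Big[\sum_{s=1}^S\lambda^{(s)}\mathsf{W}_2^2(f_{\#}\mu,f_{\#}\mu^{(s)})\Big]^{1/4}+LC\big[\mathsf{W}_2^2(f_{\#}\mu^{(u)},f_{\#}\mu)\big]^{1/4}+\sum_{s=1}^S\lambda^{(s)}\sigma^{(u,s)}, \] where $\mathsf{W}_2$ is the Wasserstein-2 distance.
   Context: Decomposes the intractable unseen-domain Wasserstein term into an optimizable term (minimized by the Wasserstein-2 barycenter of the seen-domain pushforwards) and a term depending only on the unseen domain. *)

theory Defs
  imports "HOL-Probability.Probability"
begin

definition pushforward :: "('a \<Rightarrow> 'b::topological_space) \<Rightarrow> 'a measure \<Rightarrow> 'b measure" where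
  "pushforward f M = distr M borel f"

definition msupport :: "'a::topological_space measure \<Rightarrow> 'a set" where
  "msupport M = {x. \<forall>U. open U \<and> x \<in> U \<longrightarrow> emeasure M U > 0}"

definition regular :: "real \<Rightarrow> real \<Rightarrow> 'b::euclidean_space measure \<Rightarrow> bool" where
  "regular c1 c2 P \<longleftrightarrow>
     (\<exists>p :: 'b \<Rightarrow> real.
        p \<in> borel_measurable borel \<and> (\<forall>x. p x > 0) \<and> (\<forall>x. p differentiable (at x)) \<and>
        P = density lborel (\<lambda>x. ennreal (p x)) \<and>
        (\<forall>x. \<exists>grad. ((\<lambda>y. log 2 (p y)) has_derivative (\<lambda>v. grad \<bullet> v)) (at x) \<and>
                    norm grad \<le> c1 * norm x + c2))"

definition couplings :: "'b::euclidean_space measure \<Rightarrow> 'b measure \<Rightarrow> ('b \<times> 'b) measure set" where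
  "couplings P Q = {\<gamma>. prob_space \<gamma> \<and> sets \<gamma> = sets (borel \<Otimes>\<^sub>M borel) \<and>
                        distr \<gamma> borel fst = P \<and> distr \<gamma> borel snd = Q}"

text \<open>Squared Wasserstein-2 distance (real-valued; finite under the finite-second-moment
  hypotheses of the theorem).\<close>
definition W2sq :: "'b::euclidean_space measure \<Rightarrow> 'b measure \<Rightarrow> real" where
  "W2sq P Q = enn2real (\<Sqinter>\<gamma>\<in>couplings P Q. \<integral>\<^sup>+ z. ennreal ((norm (fst z - snd z))\<^sup>2) \<partial>\<gamma>)"

definition risk :: "('y \<Rightarrow> 'y \<Rightarrow> real) \<Rightarrow> 'a measure \<Rightarrow> ('a \<Rightarrow> 'y) \<Rightarrow> ('a \<Rightarrow> 'y) \<Rightarrow> real" where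
  "risk loss M hv h = (\<integral>x. loss (h x) (hv x) \<partial>M)"

end

theory Submission
  imports Defs
begin

text \<open>Fix a seen domain \<open>s\<close>. The triangle inequality for the loss, routed through the labelling
  function of the other domain, reduces the claim to bounding \<open>\<integral>\<psi> d\<mu>\<^sup>u - \<integral>\<psi> d\<mu>\<^sup>s\<close> for a
  measurable \<open>\<psi>\<close> with values in \<open>[0, L]\<close>. As \<open>f\<close> is injective on the supports, Lusin's theorem
  and inner regularity give a compact set of almost full measure on which \<open>f\<close> is a homeomorphism
  onto its image, so \<open>\<psi>\<close> can be transported to the representation space. There the difference of
  the integrals is at most \<open>L\<close> times the square root of the Jeffreys divergence \<open>J\<close> of the two
  pushforward densities. The bound on the gradient of \<open>log p\<close> makes the log-likelihood ratio
  Lipschitz with linearly growing constant, so along any coupling Cauchy-Schwarz gives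
  \<open>J \<le> C\<^sup>2 W\<^sub>2\<close>. The triangle inequality for \<open>W\<^sub>2\<close> through the arbitrary \<open>f\<^sub>#\<mu>\<close>, proved by gluing
  near-optimal couplings along a fine countable partition, splits this into the two terms of the
  bound; averaging over \<open>s\<close> and Jensen's inequality for the concave fourth root finish the proof.\<close>

lemma sum_weighted_sqrt_le:
  fixes lam y :: "'i \<Rightarrow> real"
  assumes "finite I" "I \<noteq> {}" "sum lam I = 1" "\<And>i. i \<in> I \<Longrightarrow> lam i \<ge> 0"
    and y: "\<And>i. i \<in> I \<Longrightarrow> y i \<ge> 0"
  shows "(\<Sum>i\<in>I. lam i * sqrt (y i)) \<le> sqrt (\<Sum>i\<in>I. lam i * y i)"
proof (rule real_le_rsqrt)
  have "(\<Sum>i\<in>I. lam i *\<^sub>R sqrt (y i))\<^sup>2 \<le> (\<Sum>i\<in>I. lam i * (sqrt (y i))\<^sup>2)"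
    by (rule convex_on_sum[OF assms(1,2) convex_power2 assms(3,4)]) auto
  also have "\<dots> = (\<Sum>i\<in>I. lam i * y i)"
    using y by (intro sum.cong) auto
  finally show "(\<Sum>i\<in>I. lam i * sqrt (y i))\<^sup>2 \<le> (\<Sum>i\<in>I. lam i * y i)" by simp
qed

lemma powr_quarter_eq_sqrt_sqrt: "(x::real) \<ge> 0 \<Longrightarrow> x powr (1/4) = sqrt (sqrt x)"
  using powr_half_sqrt_powr[of x "1/2"] by (simp add: powr_half_sqrt)

lemma sum_weighted_powr_quarter_le:
  fixes lam y :: "'i \<Rightarrow> real"
  assumes I: "finite I" "I \<noteq> {}" and lam: "sum lam I = 1" "\<And>i. i \<in> I \<Longrightarrow> lam i \<ge> 0"
    and y: "\<And>i. i \<in> I \<Longrightarrow> y i \<ge> 0"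
  shows "(\<Sum>i\<in>I. lam i * y i powr (1/4)) \<le> (\<Sum>i\<in>I. lam i * y i) powr (1/4)"
proof -
  have "(\<Sum>i\<in>I. lam i * y i powr (1/4)) = (\<Sum>i\<in>I. lam i * sqrt (sqrt (y i)))"
    using y by (simp add: powr_quarter_eq_sqrt_sqrt)
  also have "\<dots> \<le> sqrt (\<Sum>i\<in>I. lam i * sqrt (y i))"
    using y by (intro sum_weighted_sqrt_le[OF I lam]) auto
  also have "\<dots> \<le> sqrt (sqrt (\<Sum>i\<in>I. lam i * y i))"
    using y by (intro real_sqrt_le_mono sum_weighted_sqrt_le[OF I lam])
  also have "\<dots> = (\<Sum>i\<in>I. lam i * y i) powr (1/4)"
    using lam y by (simp add: powr_quarter_eq_sqrt_sqrt sum_nonneg)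
  finally show ?thesis .
qed

lemma le_sqrt_of_le_AM_GM_family:
  fixes m J :: real
  assumes J: "J \<ge> 0" and h: "\<And>t. t > 0 \<Longrightarrow> m \<le> (J / t + t) / 2"
  shows "m \<le> sqrt J"
proof (cases "J = 0")
  case True
  have "m \<le> 0 + e" if "e > 0" for e
    using h[of "2 * e"] that True by simp
  then have "m \<le> 0" by (rule field_le_epsilon)
  then show ?thesis using True by simp
next
  case False
  then have "m \<le> (J / sqrt J + sqrt J) / 2" using h[of "sqrt J"] J by simp
  also have "J / sqrt J = sqrt J" using False J by (simp add: real_div_sqrt)
  finally show ?thesis by simp
qed

lemma max_diff_0_le_ln_diff:
  fixes a b t :: real
  assumes a: "a > 0" and b: "b > 0" and t: "t > 0"
  shows "max (a - b) 0 \<le> ((a - b) * (ln a - ln b) / t + t * a) / 2"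
proof (cases "a \<le> b")
  case True
  then have "(a - b) * (ln a - ln b) \<ge> 0"
    using a b by (intro mult_nonpos_nonpos) auto
  then show ?thesis using True t a by auto
next
  case False
  define X where "X = (a - b) * (ln a - ln b)"
  have "ln (b / a) \<le> b / a - 1" using a b by (intro ln_le_minus_one) auto
  then have "(a - b) / a \<le> ln a - ln b" using a b by (simp add: ln_div field_simps)
  then have "(a - b) * ((a - b) / a) \<le> X" unfolding X_def using False by (intro mult_left_mono) auto
  then have "(a - b)\<^sup>2 \<le> a * X" using a by (simp add: power2_eq_square field_simps)
  moreover have "a * X = X / t * (t * a)" using t by simp
  ultimately have sq: "(a - b)\<^sup>2 \<le> X / t * (t * a)" by simp
  have "0 \<le> a * X" using \<open>(a - b)\<^sup>2 \<le> a * X\<close> by (meson order_trans zero_le_power2)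
  then have "X \<ge> 0" using a by (simp add: zero_le_mult_iff)
  have "a - b = sqrt ((a - b)\<^sup>2)" using False by simp
  also have "\<dots> \<le> sqrt (X / t * (t * a))" using sq by (rule real_sqrt_le_mono)
  also have "\<dots> \<le> (X / t + t * a) / 2"
    using \<open>X \<ge> 0\<close> a t by (intro arith_geo_mean_sqrt) auto
  finally show ?thesis using False unfolding X_def by simp
qed

lemma le_of_tendsto_at_right_0:
  fixes a l :: real and g :: "real \<Rightarrow> real"
  assumes "\<And>e. e > 0 \<Longrightarrow> a \<le> g e" and "(g \<longlongrightarrow> l) (at_right 0)"
  shows "a \<le> l"
proof (rule tendsto_lowerbound[OF assms(2)])
  show "\<forall>\<^sub>F e in at_right 0. a \<le> g e"
    by (rule eventually_at_rightI[of 0 1]) (auto intro: assms(1))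
qed simp

section \<open>Supports, inner regularity and Lusin's theorem\<close>

lemma closed_msupport: "closed (msupport M)"
proof -
  have "- msupport M = \<Union>{U. open U \<and> emeasure M U = 0}"
    unfolding msupport_def by (auto simp: not_less)
  then show ?thesis by (metis (no_types, lifting) closed_def mem_Collect_eq open_Union)
qed

lemma AE_in_msupport:
  fixes M :: "'a::second_countable_topology measure"
  assumes "sets M = sets borel"
  shows "AE x in M. x \<in> msupport M"
proof -
  obtain F where F: "F \<subseteq> {U. open U \<and> emeasure M U = 0}" "countable F"
      "\<Union>F = \<Union>{U. open U \<and> emeasure M U = 0}"
    using Lindelof[of "{U. open U \<and> emeasure M U = 0}"] by blast
  have "(\<Union>U\<in>F. U) \<in> null_sets M"
    by (rule null_sets_UN') (use F(1,2) assms in \<open>auto simp: null_sets_def\<close>)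
  moreover have "- msupport M = \<Union>F"
    unfolding F(3) msupport_def by (auto simp: not_less)
  ultimately show ?thesis by (intro AE_I'[of "\<Union>F"]) auto
qed

lemma finite_measure_compact_subset_approx:
  fixes M :: "'a::polish_space measure"
  assumes M: "sets M = sets borel" "finite_measure M" and B: "B \<in> sets borel" and e: "e > 0"
  obtains K where "compact K" "K \<subseteq> B" "measure M (B - K) \<le> e"
proof (cases "measure M B \<le> e")
  case True
  then show ?thesis using that[of "{}"] by auto
next
  case False
  interpret finite_measure M by fact
  have "ennreal (measure M B - e) < emeasure M B"
    using False e by (simp add: emeasure_eq_measure ennreal_less_iff)
  also have "emeasure M B = (SUP K \<in> {K. K \<subseteq> B \<and> compact K}. emeasure M K)"
    by (rule inner_regular[OF M(1) _ B]) simp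
  finally obtain K where K: "K \<subseteq> B" "compact K" "ennreal (measure M B - e) < emeasure M K"
    unfolding less_SUP_iff by blast
  have "K \<in> sets M" using K(2) M(1) by (simp add: compact_imp_closed borel_closed)
  moreover have "measure M B - e < measure M K"
    using K(3) False by (simp add: emeasure_eq_measure ennreal_less_iff)
  ultimately show ?thesis
    using that[OF K(2,1)] finite_measure_Diff[of B K] B K(1) M(1) by simp
qed

lemma continuous_on_INT_separating_closed:
  fixes f :: "'a::topological_space \<Rightarrow> 'b::topological_space"
  assumes V: "topological_basis (range V)" and G: "\<And>n. closed (G n)"
    and F_sub: "\<And>n. F n \<subseteq> f -` V n" and G_sub: "\<And>n. G n \<subseteq> - f -` V n"
  shows "continuous_on (\<Inter>n. F n \<union> G n) f"
  unfolding continuous_on_open_invariant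
proof (intro allI impI)
  fix B :: "'b set" assume "open B"
  define C where "C = (\<Inter>n. F n \<union> G n)"
  \<comment> \<open>on \<open>C\<close>, the open set \<open>- G n\<close> lies inside \<open>F n \<subseteq> f -` V n\<close>\<close>
  define U where "U = (\<Union>n\<in>{n. V n \<subseteq> B}. - G n)"
  have "U \<inter> C = f -` B \<inter> C"
  proof (intro equalityI subsetI)
    fix x assume x: "x \<in> U \<inter> C"
    then obtain n where "V n \<subseteq> B" "x \<notin> G n" unfolding U_def by auto
    moreover have "x \<in> F n \<union> G n" using x unfolding C_def by auto
    ultimately show "x \<in> f -` B \<inter> C" using x F_sub by auto
  next
    fix x assume x: "x \<in> f -` B \<inter> C"
    then obtain n where "f x \<in> V n" "V n \<subseteq> B"
      using topological_basisE[OF V \<open>open B\<close>, of "f x"] by blast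
    then show "x \<in> U \<inter> C" using x G_sub[of n] unfolding U_def by auto
  qed
  moreover have "open U" unfolding U_def using G by (intro open_UN ballI open_Compl)
  ultimately show "\<exists>A. open A \<and> A \<inter> (\<Inter>n. F n \<union> G n) = f -` B \<inter> (\<Inter>n. F n \<union> G n)"
    unfolding C_def by blast
qed

lemma obtain_nat_indexed_basis:
  obtains V :: "nat \<Rightarrow> 'a::second_countable_topology set" where "topological_basis (range V)"
proof -
  obtain Bs :: "'a set set" where Bs: "countable Bs" "topological_basis Bs"
    using ex_countable_basis by blast
  moreover have "Bs \<noteq> {}"
    using topological_basisE[OF Bs(2) open_UNIV, of undefined] by blast
  ultimately show ?thesis using that[of "from_nat_into Bs"] by simp
qed

lemma (in finite_measure) measure_UN_le_of_geometric:
  assumes A: "range A \<subseteq> sets M" and le: "\<And>n. measure M (A n) \<le> e / 2 * (1/2) ^ n"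
  shows "measure M (\<Union>n. A n) \<le> e"
proof -
  have geom: "(\<lambda>n. e / 2 * (1/2) ^ n) sums e"
    using sums_mult[OF geometric_sums[of "1/2::real"], of "e / 2"] by simp
  have "summable (\<lambda>n. measure M (A n))"
    by (rule summable_comparison_test'[OF sums_summable[OF geom]]) (use le in auto)
  then have "measure M (\<Union>n. A n) \<le> (\<Sum>n. measure M (A n))"
    by (rule finite_measure_subadditive_countably[OF A])
  also have "\<dots> \<le> e"
    using suminf_le[OF le _ sums_summable[OF geom]] sums_unique[OF geom] \<open>summable _\<close> by simp
  finally show ?thesis .
qed

lemma lusin:
  fixes M :: "'a::polish_space measure" and f :: "'a \<Rightarrow> 'b::second_countable_topology"
  assumes M: "sets M = sets borel" "finite_measure M"
    and f: "f \<in> borel_measurable borel" and e: "e > 0"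
  obtains C where "closed C" "continuous_on C f" "measure M (- C) \<le> e"
proof -
  interpret finite_measure M by fact
  obtain V :: "nat \<Rightarrow> 'b set" where V: "topological_basis (range V)"
    by (rule obtain_nat_indexed_basis)
  define E where "E n = f -` V n" for n
  have E: "E n \<in> sets borel" "- E n \<in> sets borel" for n
    using measurable_sets_borel[OF f] topological_basis_open[OF V] by (auto simp: E_def)
  define ee where "ee n = e / 4 * (1/2) ^ n" for n :: nat
  have "ee n > 0" for n using e by (simp add: ee_def)
  then have "\<exists>F G. compact F \<and> F \<subseteq> E n \<and> measure M (E n - F) \<le> ee n \<and>
      compact G \<and> G \<subseteq> - E n \<and> measure M (- E n - G) \<le> ee n" for n
    using finite_measure_compact_subset_approx[OF M E(1)] finite_measure_compact_subset_approx[OF M E(2)]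
    by metis
  then obtain F G where F: "\<And>n. compact (F n)" "\<And>n. F n \<subseteq> E n" "\<And>n. measure M (E n - F n) \<le> ee n"
    and G: "\<And>n. compact (G n)" "\<And>n. G n \<subseteq> - E n" "\<And>n. measure M (- E n - G n) \<le> ee n"
    by metis
  have FG: "F n \<in> sets M" "G n \<in> sets M" "E n \<in> sets M" "- E n \<in> sets M" for n
    using F(1) G(1) E M(1) by (auto intro: borel_compact)
  define C where "C = (\<Inter>n. F n \<union> G n)"
  have "- C = (\<Union>n. (E n - F n) \<union> (- E n - G n))" unfolding C_def using F(2) G(2) by blast
  also have "measure M \<dots> \<le> e"
  proof (rule measure_UN_le_of_geometric)
    show "range (\<lambda>n. (E n - F n) \<union> (- E n - G n)) \<subseteq> sets M" using FG by auto
    fix n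
    have "measure M ((E n - F n) \<union> (- E n - G n)) \<le> measure M (E n - F n) + measure M (- E n - G n)"
      using FG by (intro measure_Un_le) auto
    also have "\<dots> \<le> e / 2 * (1/2) ^ n" using F(3)[of n] G(3)[of n] by (simp add: ee_def)
    finally show "measure M ((E n - F n) \<union> (- E n - G n)) \<le> e / 2 * (1/2) ^ n" .
  qed
  finally have "measure M (- C) \<le> e" .
  moreover have "closed C"
    unfolding C_def using F(1) G(1) by (intro closed_INT ballI closed_Un compact_imp_closed)
  moreover have "continuous_on C f"
    unfolding C_def using V compact_imp_closed[OF G(1)] F(2) G(2)[unfolded E_def]
    unfolding E_def by (rule continuous_on_INT_separating_closed)
  ultimately show ?thesis using that by blast
qed

lemma lusin_compact:
  fixes M :: "'a::polish_space measure" and f :: "'a \<Rightarrow> 'b::second_countable_topology"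
  assumes M: "sets M = sets borel" "finite_measure M"
    and f: "f \<in> borel_measurable borel" and B: "B \<in> sets borel" and e: "e > 0"
  obtains K where "compact K" "K \<subseteq> B" "continuous_on K f" "measure M (B - K) \<le> e"
proof -
  interpret finite_measure M by fact
  have e2: "e / 2 > 0" using e by simp
  obtain K where K: "compact K" "K \<subseteq> B" "measure M (B - K) \<le> e / 2"
    by (rule finite_measure_compact_subset_approx[OF M B e2])
  obtain C where C: "closed C" "continuous_on C f" "measure M (- C) \<le> e / 2"
    by (rule lusin[OF M f e2])
  have sets: "B \<in> sets M" "K \<in> sets M" "- C \<in> sets M"
    using B borel_compact[OF K(1)] borel_open[OF open_Compl[OF C(1)]] unfolding M(1) .
  have "B - K \<inter> C \<subseteq> (B - K) \<union> - C" by blast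
  then have "measure M (B - K \<inter> C) \<le> measure M ((B - K) \<union> - C)"
    by (intro finite_measure_mono sets.Un sets.Diff sets)
  also have "\<dots> \<le> measure M (B - K) + measure M (- C)"
    by (intro measure_Un_le sets.Diff sets)
  finally have "measure M (B - K \<inter> C) \<le> e" using K(3) C(3) by simp
  moreover have "compact (K \<inter> C)" using K(1) C(1) by (rule compact_Int_closed)
  moreover have "continuous_on (K \<inter> C) f" using C(2) by (rule continuous_on_subset) simp
  moreover have "K \<inter> C \<subseteq> B" using K(2) by blast
  ultimately show ?thesis using that by blast
qed

section \<open>Transport through a map that is injective on the supports\<close>

lemma (in finite_measure) integral_le_integral_indicator_add:
  fixes psi :: "'a \<Rightarrow> real"
  assumes psi: "psi \<in> borel_measurable M" "\<And>x. 0 \<le> psi x" "\<And>x. psi x \<le> L"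
    and K: "K \<in> sets M" and S: "S \<in> sets M" "AE x in M. x \<in> S"
  shows "(\<integral>x. psi x \<partial>M) \<le> (\<integral>x. indicator K x * psi x \<partial>M) + L * measure M (S - K)"
proof -
  have "L \<ge> 0" using psi(2,3) order_trans by blast
  have int: "integrable M (\<lambda>x. indicator K x * psi x)"
    using psi K \<open>L \<ge> 0\<close> by (intro integrable_const_bound[where B = L]) (auto simp: indicator_def)
  have int': "integrable M (\<lambda>x. L * indicator (S - K) x)"
    using K S by (intro integrable_mult_right integrable_real_indicator) (auto simp: less_top[symmetric])
  have "integrable M psi"
    using psi by (intro integrable_const_bound[where B = L]) auto
  then have "(\<integral>x. psi x \<partial>M) \<le> (\<integral>x. indicator K x * psi x + L * indicator (S - K) x \<partial>M)"
    using psi int int' S(2) by (intro integral_mono_AE) (auto simp: indicator_def)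
  also have "\<dots> = (\<integral>x. indicator K x * psi x \<partial>M) + L * measure M (S - K)"
    using int int' K S by simp
  finally show ?thesis .
qed

lemma borel_measurable_inv_into_compact:
  fixes f :: "'a::t2_space \<Rightarrow> 'b::t2_space" and psi :: "'a \<Rightarrow> real"
  assumes K: "compact K" "continuous_on K f" "inj_on f K" and psi: "psi \<in> borel_measurable borel"
  shows "(\<lambda>y. indicator (f ` K) y * psi (inv_into K f y)) \<in> borel_measurable borel"
proof -
  have "continuous_on (f ` K) (inv_into K f)"
    using K by (intro continuous_on_inv) auto
  then have "(\<lambda>y. psi (inv_into K f y)) \<in> borel_measurable (restrict_space borel (f ` K))"
    using psi by (intro measurable_compose[OF borel_measurable_continuous_on_restrict])
  moreover have "f ` K \<in> sets borel"
    using compact_continuous_image[OF K(2,1)] by (rule borel_compact)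
  ultimately show ?thesis
    using borel_measurable_restrict_space_iff[of "f ` K" borel "\<lambda>y. psi (inv_into K f y)"] by simp
qed

lemma integral_pushforward_inv_into_compact:
  fixes M :: "'a::t2_space measure" and f :: "'a \<Rightarrow> 'b::t2_space" and psi :: "'a \<Rightarrow> real"
  assumes M: "sets M = sets borel" and f: "f \<in> borel_measurable borel"
    and K: "compact K" "continuous_on K f" "K \<subseteq> S" and inj: "inj_on f S"
    and S: "AE x in M. x \<in> S" and psi: "psi \<in> borel_measurable borel"
  defines "phi \<equiv> \<lambda>y. indicator (f ` K) y * psi (inv_into K f y)"
  shows "(\<integral>y. phi y \<partial>pushforward f M) = (\<integral>x. indicator K x * psi x \<partial>M)"
proof -
  have phi: "phi \<in> borel_measurable borel"
    unfolding phi_def using K(1,2) inj_on_subset[OF inj K(3)] psi by (rule borel_measurable_inv_into_compact)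
  have key: "phi (f x) = indicator K x * psi x" if "x \<in> S" for x
  proof (cases "x \<in> K")
    case True
    then show ?thesis using inj_on_subset[OF inj K(3)] by (simp add: phi_def)
  next
    case False
    have "f x \<notin> f ` K"
    proof
      assume "f x \<in> f ` K"
      then obtain k where "k \<in> K" "f x = f k" by auto
      then show False using inj_onD[OF inj \<open>f x = f k\<close> that] K(3) False by blast
    qed
    then show ?thesis using False by (simp add: phi_def)
  qed
  have fM: "f \<in> M \<rightarrow>\<^sub>M borel" using f by (simp add: measurable_cong_sets[OF M refl])
  have "(\<integral>y. phi y \<partial>pushforward f M) = (\<integral>x. phi (f x) \<partial>M)"
    unfolding pushforward_def by (rule integral_distr[OF fM phi])
  also have "\<dots> = (\<integral>x. indicator K x * psi x \<partial>M)"
  proof (rule integral_cong_AE)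
    show "(\<lambda>x. phi (f x)) \<in> borel_measurable M" by (rule measurable_compose[OF fM phi])
    show "(\<lambda>x. indicator K x * psi x) \<in> borel_measurable M"
      using psi borel_compact[OF K(1)] by (simp add: measurable_cong_sets[OF M refl])
    show "AE x in M. phi (f x) = indicator K x * psi x"
      using S by (rule eventually_mono) (rule key)
  qed
  finally show ?thesis .
qed

lemma integral_diff_le_of_pushforward_integral_diff_le:
  fixes mu1 mu2 :: "'a::polish_space measure"
    and f :: "'a \<Rightarrow> 'b::{second_countable_topology, t2_space}" and psi :: "'a \<Rightarrow> real"
  assumes mu: "prob_space mu1" "prob_space mu2" "sets mu1 = sets borel" "sets mu2 = sets borel"
    and f: "f \<in> borel_measurable borel" and inj: "inj_on f (msupport mu1 \<union> msupport mu2)"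
    and psi: "psi \<in> borel_measurable borel" "\<And>x. 0 \<le> psi x" "\<And>x. psi x \<le> L"
    and pushforward_le: "\<And>phi. phi \<in> borel_measurable borel \<Longrightarrow> (\<And>y. 0 \<le> phi y) \<Longrightarrow>
        (\<And>y. phi y \<le> L) \<Longrightarrow> (\<integral>y. phi y \<partial>pushforward f mu1) - (\<integral>y. phi y \<partial>pushforward f mu2) \<le> T"
  shows "(\<integral>x. psi x \<partial>mu1) - (\<integral>x. psi x \<partial>mu2) \<le> T"
proof (rule field_le_epsilon)
  fix e :: real assume "e > 0"
  interpret mu1: prob_space mu1 by fact
  interpret mu2: prob_space mu2 by fact
  have "L \<ge> 0" using psi(2,3) order_trans by blast
  define S where "S = msupport mu1 \<union> msupport mu2"
  have S: "S \<in> sets borel" unfolding S_def using closed_msupport by (intro borel_closed closed_Un)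
  have AE_S: "AE x in mu1. x \<in> S" "AE x in mu2. x \<in> S"
    using AE_in_msupport[OF mu(3)] AE_in_msupport[OF mu(4)] unfolding S_def by auto
  have "e / (L + 1) > 0" using \<open>e > 0\<close> \<open>L \<ge> 0\<close> by simp
  then obtain K where K: "compact K" "K \<subseteq> S" "continuous_on K f" "measure mu1 (S - K) \<le> e / (L + 1)"
    using lusin_compact[OF mu(3) mu1.finite_measure_axioms f S] by metis
  have inj_S: "inj_on f S" using inj unfolding S_def .
  \<comment> \<open>by injectivity on the supports, \<open>phi \<circ> f = indicator K * psi\<close> almost everywhere for both measures\<close>
  define phi where "phi y = indicator (f ` K) y * psi (inv_into K f y)" for y
  have phi: "phi \<in> borel_measurable borel"
    unfolding phi_def using K(1,3) inj_on_subset[OF inj_S K(2)] psi(1)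
    by (rule borel_measurable_inv_into_compact)
  have phi_bounds: "0 \<le> phi y" "phi y \<le> L" for y
    unfolding phi_def using psi(2,3) \<open>L \<ge> 0\<close> by (auto simp: indicator_def)
  have pull: "(\<integral>y. phi y \<partial>pushforward f mu) = (\<integral>x. indicator K x * psi x \<partial>mu)"
    if "sets mu = sets borel" "AE x in mu. x \<in> S" for mu
    unfolding phi_def
    using integral_pushforward_inv_into_compact[OF that(1) f K(1,3,2) inj_S that(2) psi(1)] .
  have sets: "K \<in> sets mu1" "S \<in> sets mu1" using borel_compact[OF K(1)] S mu(3) by auto
  have psi_mu: "psi \<in> borel_measurable mu1" using psi(1) by (simp add: measurable_cong_sets[OF mu(3) refl])
  have "(\<integral>x. psi x \<partial>mu1) \<le> (\<integral>x. indicator K x * psi x \<partial>mu1) + L * measure mu1 (S - K)"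
    by (rule mu1.integral_le_integral_indicator_add[OF psi_mu psi(2,3) sets AE_S(1)])
  also have "L * measure mu1 (S - K) \<le> e"
  proof -
    have "L * measure mu1 (S - K) \<le> L * (e / (L + 1))" using K(4) \<open>L \<ge> 0\<close> by (rule mult_left_mono)
    also have "\<dots> \<le> e" using \<open>e > 0\<close> \<open>L \<ge> 0\<close> by (simp add: field_simps)
    finally show ?thesis .
  qed
  finally have le1: "(\<integral>x. psi x \<partial>mu1) \<le> (\<integral>y. phi y \<partial>pushforward f mu1) + e"
    using pull[OF mu(3) AE_S(1)] by simp
  have "(\<integral>x. indicator K x * psi x \<partial>mu2) \<le> (\<integral>x. psi x \<partial>mu2)"
    using psi borel_compact[OF K(1)] \<open>L \<ge> 0\<close>
    by (intro integral_mono mu2.integrable_const_bound[where B = L])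
      (auto simp: indicator_def measurable_cong_sets[OF mu(4) refl])
  then have le2: "(\<integral>y. phi y \<partial>pushforward f mu2) \<le> (\<integral>x. psi x \<partial>mu2)"
    using pull[OF mu(4) AE_S(2)] by simp
  show "(\<integral>x. psi x \<partial>mu1) - (\<integral>x. psi x \<partial>mu2) \<le> T + e"
    using pushforward_le[OF phi phi_bounds] le1 le2 by linarith
qed

section \<open>Square-integrable functions\<close>

lemma
  fixes f g :: "'a \<Rightarrow> real"
  assumes [measurable]: "f \<in> borel_measurable M" "g \<in> borel_measurable M"
    and f2: "integrable M (\<lambda>x. (f x)\<^sup>2)" and g2: "integrable M (\<lambda>x. (g x)\<^sup>2)"
  shows integrable_mult_of_square_integrable: "integrable M (\<lambda>x. f x * g x)"
    and integral_mult_le_sqrt_integral_square: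
      "(\<integral>x. f x * g x \<partial>M) \<le> sqrt (\<integral>x. (f x)\<^sup>2 \<partial>M) * sqrt (\<integral>x. (g x)\<^sup>2 \<partial>M)"
proof -
  have bound: "\<bar>f x * g x\<bar> \<le> ((f x)\<^sup>2 + (g x)\<^sup>2) / 2" for x
    using sum_squares_bound[of "\<bar>f x\<bar>" "\<bar>g x\<bar>"] by (simp add: abs_mult)
  show int: "integrable M (\<lambda>x. f x * g x)"
    by (rule Bochner_Integration.integrable_bound[where f = "\<lambda>x. ((f x)\<^sup>2 + (g x)\<^sup>2) / 2"])
       (use f2 g2 bound in auto)
  have int_abs: "integrable M (\<lambda>x. \<bar>f x\<bar> * \<bar>g x\<bar>)"
    using integrable_abs[OF int] by (simp add: abs_mult)
  have "ennreal (\<integral>x. \<bar>f x\<bar> * \<bar>g x\<bar> \<partial>M) ^ 2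
      = (\<integral>\<^sup>+x. ennreal \<bar>f x\<bar> * ennreal \<bar>g x\<bar> \<partial>M) ^ 2"
    by (simp add: nn_integral_eq_integral[OF int_abs, symmetric] ennreal_mult)
  also have "\<dots> \<le> (\<integral>\<^sup>+x. ennreal \<bar>f x\<bar> ^ 2 \<partial>M) * (\<integral>\<^sup>+x. ennreal \<bar>g x\<bar> ^ 2 \<partial>M)"
    by (rule Cauchy_Schwarz_nn_integral) auto
  also have "\<dots> = ennreal ((\<integral>x. (f x)\<^sup>2 \<partial>M) * (\<integral>x. (g x)\<^sup>2 \<partial>M))"
    using f2 g2 by (simp add: ennreal_power nn_integral_eq_integral ennreal_mult)
  finally have "(\<integral>x. \<bar>f x\<bar> * \<bar>g x\<bar> \<partial>M) ^ 2 \<le> (\<integral>x. (f x)\<^sup>2 \<partial>M) * (\<integral>x. (g x)\<^sup>2 \<partial>M)"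
    by (subst (asm) ennreal_power) (auto simp: integral_nonneg_AE)
  then have "(\<integral>x. \<bar>f x\<bar> * \<bar>g x\<bar> \<partial>M) \<le> sqrt ((\<integral>x. (f x)\<^sup>2 \<partial>M) * (\<integral>x. (g x)\<^sup>2 \<partial>M))"
    by (rule real_le_rsqrt)
  moreover have "(\<integral>x. f x * g x \<partial>M) \<le> (\<integral>x. \<bar>f x\<bar> * \<bar>g x\<bar> \<partial>M)"
    using int by (intro integral_mono) (auto simp: abs_mult[symmetric])
  ultimately show "(\<integral>x. f x * g x \<partial>M) \<le> sqrt (\<integral>x. (f x)\<^sup>2 \<partial>M) * sqrt (\<integral>x. (g x)\<^sup>2 \<partial>M)"
    by (simp add: real_sqrt_mult)
qed

lemma
  fixes X Y Z :: "'a \<Rightarrow> 'b::{real_normed_vector, second_countable_topology}"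
  assumes [measurable]: "X \<in> borel_measurable M" "Y \<in> borel_measurable M" "Z \<in> borel_measurable M"
    and XY: "integrable M (\<lambda>x. (norm (X x - Y x))\<^sup>2)" and YZ: "integrable M (\<lambda>x. (norm (Y x - Z x))\<^sup>2)"
  shows integrable_norm_diff_square_trans: "integrable M (\<lambda>x. (norm (X x - Z x))\<^sup>2)"
    and sqrt_integral_norm_diff_square_triangle:
      "sqrt (\<integral>x. (norm (X x - Z x))\<^sup>2 \<partial>M)
         \<le> sqrt (\<integral>x. (norm (X x - Y x))\<^sup>2 \<partial>M) + sqrt (\<integral>x. (norm (Y x - Z x))\<^sup>2 \<partial>M)"
proof -
  define a where "a x = norm (X x - Y x)" for x
  define b where "b x = norm (Y x - Z x)" for x
  have [measurable]: "a \<in> borel_measurable M" unfolding a_def by measurable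
  have [measurable]: "b \<in> borel_measurable M" unfolding b_def by measurable
  have a2: "integrable M (\<lambda>x. (a x)\<^sup>2)" and b2: "integrable M (\<lambda>x. (b x)\<^sup>2)"
    using XY YZ by (simp_all add: a_def b_def)
  have ab: "integrable M (\<lambda>x. a x * b x)" by (rule integrable_mult_of_square_integrable) fact+
  have sq: "(a x + b x)\<^sup>2 = (a x)\<^sup>2 + 2 * (a x * b x) + (b x)\<^sup>2" for x
    by (simp add: power2_sum)
  have pointwise: "(norm (X x - Z x))\<^sup>2 \<le> (a x + b x)\<^sup>2" for x
    unfolding a_def b_def by (intro power_mono norm_diff_triangle_le) auto
  have int_ab2: "integrable M (\<lambda>x. (a x + b x)\<^sup>2)" unfolding sq using a2 b2 ab by auto
  show int: "integrable M (\<lambda>x. (norm (X x - Z x))\<^sup>2)"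
    by (rule Bochner_Integration.integrable_bound[OF int_ab2]) (use pointwise in auto)
  define A where "A = (\<integral>x. (a x)\<^sup>2 \<partial>M)"
  define B where "B = (\<integral>x. (b x)\<^sup>2 \<partial>M)"
  have "A \<ge> 0" "B \<ge> 0" unfolding A_def B_def by (auto intro: integral_nonneg_AE)
  have "(\<integral>x. (norm (X x - Z x))\<^sup>2 \<partial>M) \<le> (\<integral>x. (a x + b x)\<^sup>2 \<partial>M)"
    using int int_ab2 pointwise by (rule integral_mono)
  also have "\<dots> = A + 2 * (\<integral>x. a x * b x \<partial>M) + B"
    unfolding sq A_def B_def using a2 b2 ab by simp
  also have "\<dots> \<le> A + 2 * (sqrt A * sqrt B) + B"
    using integral_mult_le_sqrt_integral_square[of a M b] a2 b2 by (simp add: A_def B_def)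
  also have "\<dots> = (sqrt A + sqrt B)\<^sup>2"
    using \<open>A \<ge> 0\<close> \<open>B \<ge> 0\<close> by (simp add: power2_sum)
  finally show "sqrt (\<integral>x. (norm (X x - Z x))\<^sup>2 \<partial>M) \<le> sqrt A + sqrt B"
    using \<open>A \<ge> 0\<close> \<open>B \<ge> 0\<close> by (simp add: real_le_lsqrt)
qed

section \<open>Couplings and the Wasserstein distance\<close>

lemma couplingsD:
  assumes "\<gamma> \<in> couplings P Q"
  shows "prob_space \<gamma>" "sets \<gamma> = sets (borel \<Otimes>\<^sub>M borel)"
    and "distr \<gamma> borel fst = P" "distr \<gamma> borel snd = Q"
  using assms unfolding couplings_def by auto

lemma pair_measure_in_couplings:
  fixes P Q :: "'b::euclidean_space measure"
  assumes "prob_space P" "sets P = sets borel" "prob_space Q" "sets Q = sets borel"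
  shows "P \<Otimes>\<^sub>M Q \<in> couplings P Q"
proof -
  interpret P: prob_space P by fact
  interpret Q: prob_space Q by fact
  interpret PQ: pair_prob_space P Q ..
  have snd: "distr (P \<Otimes>\<^sub>M Q) Q snd = Q"
  proof (rule measure_eqI)
    fix A assume A: "A \<in> sets (distr (P \<Otimes>\<^sub>M Q) Q snd)"
    then have "emeasure (distr (P \<Otimes>\<^sub>M Q) Q snd) A = emeasure (P \<Otimes>\<^sub>M Q) (space P \<times> A)"
      by (auto simp: emeasure_distr space_pair_measure dest: sets.sets_into_space
          intro!: arg_cong2[where f = emeasure])
    with A show "emeasure (distr (P \<Otimes>\<^sub>M Q) Q snd) A = emeasure Q A"
      using Q.emeasure_pair_measure_Times[OF sets.top[of P], of A] by (simp add: P.emeasure_space_1)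
  qed simp
  have "distr (P \<Otimes>\<^sub>M Q) borel fst = distr (P \<Otimes>\<^sub>M Q) P fst"
    and "distr (P \<Otimes>\<^sub>M Q) borel snd = distr (P \<Otimes>\<^sub>M Q) Q snd"
    using assms(2,4) by (auto intro!: distr_cong)
  then show ?thesis
    unfolding couplings_def
    using PQ.prob_space_axioms sets_pair_measure_cong[OF assms(2,4)]
    by (simp add: Q.distr_pair_fst snd)
qed

lemma integrable_coupling_cost:
  fixes P Q :: "'b::euclidean_space measure"
  assumes \<gamma>: "\<gamma> \<in> couplings P Q"
    and P: "integrable P (\<lambda>x. (norm x)\<^sup>2)" and Q: "integrable Q (\<lambda>x. (norm x)\<^sup>2)"
  shows "integrable \<gamma> (\<lambda>z. (norm (fst z - snd z))\<^sup>2)"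
proof -
  note \<gamma>D = couplingsD[OF \<gamma>]
  have [measurable]: "fst \<in> \<gamma> \<rightarrow>\<^sub>M borel" "snd \<in> \<gamma> \<rightarrow>\<^sub>M borel"
    by (simp_all add: measurable_cong_sets[OF \<gamma>D(2) refl])
  have moments: "integrable \<gamma> (\<lambda>z. (norm (fst z))\<^sup>2)" "integrable \<gamma> (\<lambda>z. (norm (snd z))\<^sup>2)"
    using integrable_distr_eq[of fst \<gamma> borel "\<lambda>x. (norm x)\<^sup>2"]
      integrable_distr_eq[of snd \<gamma> borel "\<lambda>x. (norm x)\<^sup>2"] P Q \<gamma>D(3,4) by simp_all
  have bound: "(norm (x - y))\<^sup>2 \<le> 2 * (norm x)\<^sup>2 + 2 * (norm y)\<^sup>2" for x y :: 'b
  proof -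
    have "(norm (x - y))\<^sup>2 \<le> (norm x + norm y)\<^sup>2"
      by (intro power_mono norm_triangle_ineq4) simp
    also have "\<dots> \<le> 2 * (norm x)\<^sup>2 + 2 * (norm y)\<^sup>2"
      using sum_squares_bound[of "norm x" "norm y"] by (simp add: power2_sum)
    finally show ?thesis .
  qed
  show ?thesis
  proof (rule Bochner_Integration.integrable_bound)
    show "integrable \<gamma> (\<lambda>z. 2 * (norm (fst z))\<^sup>2 + 2 * (norm (snd z))\<^sup>2)"
      using moments by (intro Bochner_Integration.integrable_add integrable_mult_right)
    show "AE z in \<gamma>. norm ((norm (fst z - snd z))\<^sup>2) \<le> norm (2 * (norm (fst z))\<^sup>2 + 2 * (norm (snd z))\<^sup>2)"
      using bound by (intro AE_I2) simp
  qed measurable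
qed

lemma W2sq_le_coupling_cost:
  assumes "\<gamma> \<in> couplings P Q" and "integrable \<gamma> (\<lambda>z. (norm (fst z - snd z))\<^sup>2)"
  shows "W2sq P Q \<le> (\<integral>z. (norm (fst z - snd z))\<^sup>2 \<partial>\<gamma>)"
proof -
  have "(\<integral>\<^sup>+ z. ennreal ((norm (fst z - snd z))\<^sup>2) \<partial>\<gamma>) = ennreal (\<integral>z. (norm (fst z - snd z))\<^sup>2 \<partial>\<gamma>)"
    using assms(2) by (rule nn_integral_eq_integral) simp
  moreover have "(\<Sqinter>\<gamma>\<in>couplings P Q. \<integral>\<^sup>+ z. ennreal ((norm (fst z - snd z))\<^sup>2) \<partial>\<gamma>)
      \<le> (\<integral>\<^sup>+ z. ennreal ((norm (fst z - snd z))\<^sup>2) \<partial>\<gamma>)"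
    using assms(1) by (rule INF_lower)
  ultimately show ?thesis
    unfolding W2sq_def by (intro enn2real_leI) (auto intro: integral_nonneg_AE)
qed

lemma exists_coupling_cost_le_W2sq_add:
  fixes P Q :: "'b::euclidean_space measure"
  assumes "prob_space P" "sets P = sets borel" "prob_space Q" "sets Q = sets borel"
    and mom: "integrable P (\<lambda>x. (norm x)\<^sup>2)" "integrable Q (\<lambda>x. (norm x)\<^sup>2)" and "e > 0"
  obtains \<gamma> where "\<gamma> \<in> couplings P Q" "(\<integral>z. (norm (fst z - snd z))\<^sup>2 \<partial>\<gamma>) \<le> W2sq P Q + e"
proof -
  define cost where "cost \<gamma> = (\<integral>\<^sup>+ z. ennreal ((norm (fst z - snd z))\<^sup>2) \<partial>\<gamma>)" for \<gamma> :: "('b \<times> 'b) measure"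
  have finite_cost: "cost \<gamma> = ennreal (\<integral>z. (norm (fst z - snd z))\<^sup>2 \<partial>\<gamma>)" if "\<gamma> \<in> couplings P Q" for \<gamma>
    unfolding cost_def using integrable_coupling_cost[OF that mom] by (rule nn_integral_eq_integral) simp
  have prod: "P \<Otimes>\<^sub>M Q \<in> couplings P Q" by (rule pair_measure_in_couplings) fact+
  have "(\<Sqinter>\<gamma>\<in>couplings P Q. cost \<gamma>) \<le> cost (P \<Otimes>\<^sub>M Q)" using prod by (rule INF_lower)
  then have "(\<Sqinter>\<gamma>\<in>couplings P Q. cost \<gamma>) < \<top>" using finite_cost[OF prod] by (simp add: le_less_trans)
  then have "(\<Sqinter>\<gamma>\<in>couplings P Q. cost \<gamma>) < ennreal (W2sq P Q + e)"
    unfolding W2sq_def cost_def[symmetric] using \<open>e > 0\<close>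
    by (cases "\<Sqinter>\<gamma>\<in>couplings P Q. cost \<gamma>") (auto simp: ennreal_lessI)
  then obtain \<gamma> where \<gamma>: "\<gamma> \<in> couplings P Q" "cost \<gamma> < ennreal (W2sq P Q + e)"
    unfolding INF_less_iff by blast
  then have "(\<integral>z. (norm (fst z - snd z))\<^sup>2 \<partial>\<gamma>) < W2sq P Q + e"
    using finite_cost by (simp add: ennreal_less_iff integral_nonneg_AE)
  with \<gamma>(1) show ?thesis by (intro that) auto
qed

lemma exists_measurable_cell_map:
  fixes d :: real
  assumes "d > 0"
  obtains c :: "'b::{metric_space, second_countable_topology} \<Rightarrow> nat"
  where "c \<in> borel \<rightarrow>\<^sub>M count_space UNIV" "\<And>x y. c x = c y \<Longrightarrow> dist x y < d"
proof -
  obtain D :: "'b set" where D: "countable D" "\<And>X. open X \<Longrightarrow> X \<noteq> {} \<Longrightarrow> \<exists>a\<in>D. a \<in> X"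
    using countable_dense_setE by blast
  define a where "a = from_nat_into D"
  have near: "\<exists>n. dist x (a n) < d / 2" for x
  proof -
    obtain b where "b \<in> D" "b \<in> ball x (d / 2)" using D(2)[of "ball x (d / 2)"] \<open>d > 0\<close> by auto
    then show ?thesis
      using from_nat_into_surj[OF D(1)] unfolding a_def by (metis mem_ball)
  qed
  define c where "c x = (LEAST n. dist x (a n) < d / 2)" for x
  have "dist x (a (c x)) < d / 2" for x unfolding c_def using near[of x] by (rule LeastI_ex)
  then have "dist x y < d" if "c x = c y" for x y
    using dist_triangle2[of x y "a (c x)"] that
    by (metis field_sum_of_halves add_strict_mono order_le_less_trans)
  moreover have "c \<in> borel \<rightarrow>\<^sub>M count_space UNIV" unfolding c_def by measurable
  ultimately show ?thesis using that by blast
qed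

text \<open>On cells of \<open>M\<close>-measure zero the weight is \<open>1 / 0 = \<infinity>\<close> in \<^typ>\<open>ennreal\<close>; such cells
  are null for both marginals.\<close>

definition cell_weight :: "('b \<Rightarrow> nat) \<Rightarrow> 'b measure \<Rightarrow> 'b \<Rightarrow> 'b \<Rightarrow> ennreal" where
  "cell_weight c M y z = (if c y = c z then 1 / emeasure M (c -` {c y}) else 0)"

lemma cell_weight_commute: "cell_weight c M y z = cell_weight c M z y"
  unfolding cell_weight_def by simp

lemma borel_measurable_cell_weight:
  assumes Z: "(\<lambda>\<omega>. c (Z \<omega>)) \<in> N \<rightarrow>\<^sub>M count_space UNIV"
    and [measurable]: "(\<lambda>\<omega>. c (Z' \<omega>)) \<in> N \<rightarrow>\<^sub>M count_space UNIV"
  shows "(\<lambda>\<omega>. cell_weight c M (Z \<omega>) (Z' \<omega>)) \<in> borel_measurable N"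
proof -
  have "(\<lambda>\<omega>. if i = c (Z' \<omega>) then 1 / emeasure M (c -` {i}) else 0) \<in> borel_measurable N" for i
    by measurable
  then show ?thesis
    unfolding cell_weight_def by (rule measurable_compose_countable'[OF _ Z]) simp_all
qed

lemma
  fixes M :: "'b::topological_space measure"
  assumes h: "h \<in> N \<rightarrow>\<^sub>M borel" "distr N borel h = M" and M: "finite_measure M"
    and c: "c \<in> borel \<rightarrow>\<^sub>M count_space UNIV"
  shows nn_integral_cell_weight:
      "(\<integral>\<^sup>+x. cell_weight c M y (h x) \<partial>N) = (if emeasure M (c -` {c y}) = 0 then 0 else 1)"
    and AE_cell_weight_nonzero: "AE x in N. emeasure M (c -` {c (h x)}) \<noteq> 0"
proof -
  have cell: "c -` {n} \<in> sets borel" for n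
    using measurable_sets[OF c, of "{n}"] by simp
  have cell_N: "emeasure N (h -` c -` {n} \<inter> space N) = emeasure M (c -` {n})" for n
    using emeasure_distr[OF h(1) cell] h(2) by simp
  have "(\<integral>\<^sup>+x. cell_weight c M y (h x) \<partial>N)
      = (\<integral>\<^sup>+x. (1 / emeasure M (c -` {c y})) * indicator (h -` c -` {c y} \<inter> space N) x \<partial>N)"
    by (intro nn_integral_cong) (auto simp: cell_weight_def indicator_def)
  also have "\<dots> = (1 / emeasure M (c -` {c y})) * emeasure N (h -` c -` {c y} \<inter> space N)"
    using measurable_sets[OF h(1) cell] by (rule nn_integral_cmult_indicator)
  also have "\<dots> = (1 / emeasure M (c -` {c y})) * emeasure M (c -` {c y})"
    by (simp add: cell_N)
  finally show "(\<integral>\<^sup>+x. cell_weight c M y (h x) \<partial>N) = (if emeasure M (c -` {c y}) = 0 then 0 else 1)"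
    using finite_measure.emeasure_finite[OF M] by (auto simp: ennreal_divide_times top.not_eq_extremum)
  have "(\<Union>n\<in>{n. emeasure M (c -` {n}) = 0}. h -` c -` {n} \<inter> space N) \<in> null_sets N"
    using measurable_sets[OF h(1) cell] cell_N by (intro null_sets_UN') (auto simp: null_sets_def)
  then show "AE x in N. emeasure M (c -` {c (h x)}) \<noteq> 0"
    by (rule AE_I') auto
qed

lemma (in pair_sigma_finite)
  assumes w: "w \<in> borel_measurable (M1 \<Otimes>\<^sub>M M2)"
  shows distr_fst_density:
      "(AE x in M1. (\<integral>\<^sup>+y. w (x, y) \<partial>M2) = 1) \<Longrightarrow> distr (density (M1 \<Otimes>\<^sub>M M2) w) M1 fst = M1"
    and distr_snd_density:
      "(AE y in M2. (\<integral>\<^sup>+x. w (x, y) \<partial>M1) = 1) \<Longrightarrow> distr (density (M1 \<Otimes>\<^sub>M M2) w) M2 snd = M2"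
proof -
  assume AE: "AE x in M1. (\<integral>\<^sup>+y. w (x, y) \<partial>M2) = 1"
  show "distr (density (M1 \<Otimes>\<^sub>M M2) w) M1 fst = M1"
  proof (rule measure_eqI)
    fix A assume "A \<in> sets (distr (density (M1 \<Otimes>\<^sub>M M2) w) M1 fst)"
    then have A: "A \<in> sets M1" by simp
    have "fst -` A \<inter> space (M1 \<Otimes>\<^sub>M M2) = A \<times> space M2"
      using sets.sets_into_space[OF A] by (auto simp: space_pair_measure)
    then have "emeasure (distr (density (M1 \<Otimes>\<^sub>M M2) w) M1 fst) A
        = (\<integral>\<^sup>+z. w z * indicator (A \<times> space M2) z \<partial>(M1 \<Otimes>\<^sub>M M2))"
      using A w by (simp add: emeasure_distr emeasure_density)
    also have "\<dots> = (\<integral>\<^sup>+x. \<integral>\<^sup>+y. indicator A x * w (x, y) \<partial>M2 \<partial>M1)"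
      using A w by (subst M2.nn_integral_fst[symmetric])
        (auto intro!: nn_integral_cong simp: indicator_def)
    also have "\<dots> = (\<integral>\<^sup>+x. indicator A x * (\<integral>\<^sup>+y. w (x, y) \<partial>M2) \<partial>M1)"
      using w by (intro nn_integral_cong nn_integral_cmult measurable_Pair2)
    also have "\<dots> = (\<integral>\<^sup>+x. indicator A x \<partial>M1)"
      using AE by (intro nn_integral_cong_AE) auto
    also have "\<dots> = emeasure M1 A"
      using A by simp
    finally show "emeasure (distr (density (M1 \<Otimes>\<^sub>M M2) w) M1 fst) A = emeasure M1 A" .
  qed simp
next
  assume AE: "AE y in M2. (\<integral>\<^sup>+x. w (x, y) \<partial>M1) = 1"
  show "distr (density (M1 \<Otimes>\<^sub>M M2) w) M2 snd = M2"
  proof (rule measure_eqI)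
    fix A assume "A \<in> sets (distr (density (M1 \<Otimes>\<^sub>M M2) w) M2 snd)"
    then have A: "A \<in> sets M2" by simp
    have "snd -` A \<inter> space (M1 \<Otimes>\<^sub>M M2) = space M1 \<times> A"
      using sets.sets_into_space[OF A] by (auto simp: space_pair_measure)
    then have "emeasure (distr (density (M1 \<Otimes>\<^sub>M M2) w) M2 snd) A
        = (\<integral>\<^sup>+z. w z * indicator (space M1 \<times> A) z \<partial>(M1 \<Otimes>\<^sub>M M2))"
      using A w by (simp add: emeasure_distr emeasure_density)
    also have "\<dots> = (\<integral>\<^sup>+y. \<integral>\<^sup>+x. indicator A y * w (x, y) \<partial>M1 \<partial>M2)"
      using A w by (subst nn_integral_snd[symmetric])
        (auto intro!: nn_integral_cong simp: indicator_def)
    also have "\<dots> = (\<integral>\<^sup>+y. indicator A y * (\<integral>\<^sup>+x. w (x, y) \<partial>M1) \<partial>M2)"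
      using w by (intro nn_integral_cong nn_integral_cmult measurable_Pair1)
    also have "\<dots> = (\<integral>\<^sup>+y. indicator A y \<partial>M2)"
      using AE by (intro nn_integral_cong_AE) auto
    also have "\<dots> = emeasure M2 A"
      using A by simp
    finally show "emeasure (distr (density (M1 \<Otimes>\<^sub>M M2) w) M2 snd) A = emeasure M2 A" .
  qed simp
qed

lemma exists_gluing:
  fixes P M Q :: "'b::euclidean_space measure"
  assumes g1: "g1 \<in> couplings P M" and g2: "g2 \<in> couplings M Q" and "d > 0"
  obtains \<Gamma> where "prob_space \<Gamma>" "sets \<Gamma> = sets (g1 \<Otimes>\<^sub>M g2)"
    "distr \<Gamma> (borel \<Otimes>\<^sub>M borel) fst = g1" "distr \<Gamma> (borel \<Otimes>\<^sub>M borel) snd = g2"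
    "AE \<omega> in \<Gamma>. dist (snd (fst \<omega>)) (fst (snd \<omega>)) < d"
proof -
  note g1D = couplingsD[OF g1] and g2D = couplingsD[OF g2]
  interpret g1: prob_space g1 by (fact g1D)
  interpret g2: prob_space g2 by (fact g2D)
  interpret g12: pair_prob_space g1 g2 ..
  have snd1: "snd \<in> g1 \<rightarrow>\<^sub>M borel" and fst2: "fst \<in> g2 \<rightarrow>\<^sub>M borel"
    by (simp_all add: measurable_cong_sets[OF g1D(2) refl] measurable_cong_sets[OF g2D(2) refl])
  have M: "finite_measure M"
    using g1.prob_space_distr[OF snd1] g1D(4) prob_space.finite_measure by auto
  obtain c :: "'b \<Rightarrow> nat" where c: "c \<in> borel \<rightarrow>\<^sub>M count_space UNIV" "\<And>x y. c x = c y \<Longrightarrow> dist x y < d"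
    using exists_measurable_cell_map[OF \<open>d > 0\<close>] by blast
  \<comment> \<open>glue \<open>g1\<close> and \<open>g2\<close> along the middle marginal, conditionally on the cell of the middle point\<close>
  define w where "w \<omega> = cell_weight c M (snd (fst \<omega>)) (fst (snd \<omega>))"
    for \<omega> :: "('b \<times> 'b) \<times> ('b \<times> 'b)"
  have w: "w \<in> borel_measurable (g1 \<Otimes>\<^sub>M g2)"
    unfolding w_def using measurable_compose[OF measurable_compose[OF measurable_fst snd1] c(1)]
      measurable_compose[OF measurable_compose[OF measurable_snd fst2] c(1)]
    by (rule borel_measurable_cell_weight)
  define \<Gamma> where "\<Gamma> = density (g1 \<Otimes>\<^sub>M g2) w"
  have "AE a in g1. (\<integral>\<^sup>+b. w (a, b) \<partial>g2) = 1"
    using AE_cell_weight_nonzero[OF snd1 g1D(4) M c(1)]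
    by (auto simp: w_def nn_integral_cell_weight[OF fst2 g2D(3) M c(1)])
  then have "distr \<Gamma> g1 fst = g1" unfolding \<Gamma>_def by (rule g12.distr_fst_density[OF w])
  moreover have "AE b in g2. (\<integral>\<^sup>+a. w (a, b) \<partial>g1) = 1"
    using AE_cell_weight_nonzero[OF fst2 g2D(3) M c(1)]
    by (auto simp: w_def cell_weight_commute nn_integral_cell_weight[OF snd1 g1D(4) M c(1)])
  then have "distr \<Gamma> g2 snd = g2" unfolding \<Gamma>_def by (rule g12.distr_snd_density[OF w])
  moreover have "distr \<Gamma> (borel \<Otimes>\<^sub>M borel) fst = distr \<Gamma> g1 fst"
    and "distr \<Gamma> (borel \<Otimes>\<^sub>M borel) snd = distr \<Gamma> g2 snd"
    using g1D(2) g2D(2) by (auto intro!: distr_cong)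
  moreover have "prob_space \<Gamma>"
    using \<open>distr \<Gamma> g1 fst = g1\<close> g1D(1) by (intro prob_space_distrD[of fst \<Gamma> g1]) (auto simp: \<Gamma>_def)
  moreover have "AE \<omega> in \<Gamma>. dist (snd (fst \<omega>)) (fst (snd \<omega>)) < d"
    unfolding \<Gamma>_def using w c(2) by (subst AE_density) (auto simp: w_def cell_weight_def split: if_splits)
  moreover have "sets \<Gamma> = sets (g1 \<Otimes>\<^sub>M g2)" by (simp add: \<Gamma>_def)
  ultimately show ?thesis using that by auto
qed

lemma distr_Pair_in_couplings:
  assumes "prob_space \<Gamma>" and [measurable]: "X \<in> \<Gamma> \<rightarrow>\<^sub>M borel" "Y \<in> \<Gamma> \<rightarrow>\<^sub>M borel"
    and "distr \<Gamma> borel X = P" "distr \<Gamma> borel Y = Q"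
  shows "distr \<Gamma> (borel \<Otimes>\<^sub>M borel) (\<lambda>\<omega>. (X \<omega>, Y \<omega>)) \<in> couplings P Q"
  unfolding couplings_def using assms(1,4,5)
  by (simp add: prob_space.prob_space_distr distr_distr comp_def)

lemma sqrt_W2sq_le_L2_dist:
  assumes "prob_space \<Gamma>" and [measurable]: "X \<in> \<Gamma> \<rightarrow>\<^sub>M borel" "Y \<in> \<Gamma> \<rightarrow>\<^sub>M borel"
    and "distr \<Gamma> borel X = P" "distr \<Gamma> borel Y = Q"
    and XY: "integrable \<Gamma> (\<lambda>\<omega>. (norm (X \<omega> - Y \<omega>))\<^sup>2)"
  shows "sqrt (W2sq P Q) \<le> sqrt (\<integral>\<omega>. (norm (X \<omega> - Y \<omega>))\<^sup>2 \<partial>\<Gamma>)"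
proof -
  define \<gamma> where "\<gamma> = distr \<Gamma> (borel \<Otimes>\<^sub>M borel) (\<lambda>\<omega>. (X \<omega>, Y \<omega>))"
  have "\<gamma> \<in> couplings P Q"
    unfolding \<gamma>_def by (rule distr_Pair_in_couplings) fact+
  moreover have "integrable \<gamma> (\<lambda>z. (norm (fst z - snd z))\<^sup>2)"
    using XY unfolding \<gamma>_def by (subst integrable_distr_eq) auto
  ultimately have "W2sq P Q \<le> (\<integral>z. (norm (fst z - snd z))\<^sup>2 \<partial>\<gamma>)"
    by (rule W2sq_le_coupling_cost)
  also have "\<dots> = (\<integral>\<omega>. (norm (X \<omega> - Y \<omega>))\<^sup>2 \<partial>\<Gamma>)"
    unfolding \<gamma>_def by (subst integral_distr) auto
  finally show ?thesis by (rule real_sqrt_le_mono)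
qed

lemma (in prob_space) sqrt_integral_norm_diff_square_le:
  fixes X Y :: "'a \<Rightarrow> 'b::{real_normed_vector, second_countable_topology}"
  assumes [measurable]: "X \<in> borel_measurable M" "Y \<in> borel_measurable M"
    and d: "AE \<omega> in M. dist (X \<omega>) (Y \<omega>) < d"
  shows "integrable M (\<lambda>\<omega>. (norm (X \<omega> - Y \<omega>))\<^sup>2)"
    and "sqrt (\<integral>\<omega>. (norm (X \<omega> - Y \<omega>))\<^sup>2 \<partial>M) \<le> d"
proof -
  have bound: "AE \<omega> in M. (norm (X \<omega> - Y \<omega>))\<^sup>2 \<le> d\<^sup>2"
    using d by eventually_elim (auto simp: dist_norm intro!: power_mono)
  then show int: "integrable M (\<lambda>\<omega>. (norm (X \<omega> - Y \<omega>))\<^sup>2)"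
    by (intro integrable_const_bound[where B = "d\<^sup>2"]) auto
  have "(\<integral>\<omega>. (norm (X \<omega> - Y \<omega>))\<^sup>2 \<partial>M) \<le> (\<integral>\<omega>. d\<^sup>2 \<partial>M)"
    using int bound by (intro integral_mono_AE) auto
  then have "(\<integral>\<omega>. (norm (X \<omega> - Y \<omega>))\<^sup>2 \<partial>M) \<le> d\<^sup>2" by (simp add: prob_space)
  moreover have "AE \<omega> in M. d > 0"
    using d by eventually_elim (meson le_less_trans zero_le_dist)
  then have "d > 0" by simp
  ultimately show "sqrt (\<integral>\<omega>. (norm (X \<omega> - Y \<omega>))\<^sup>2 \<partial>M) \<le> d"
    by (simp add: real_le_lsqrt)
qed

lemma
  fixes V :: "'a \<Rightarrow> 'b::euclidean_space \<times> 'b"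
  assumes V_meas: "V \<in> \<Gamma> \<rightarrow>\<^sub>M borel \<Otimes>\<^sub>M borel" and V: "distr \<Gamma> (borel \<Otimes>\<^sub>M borel) V = g"
  shows integrable_distr_coupling_cost:
      "integrable g (\<lambda>z. (norm (fst z - snd z))\<^sup>2) \<Longrightarrow>
        integrable \<Gamma> (\<lambda>\<omega>. (norm (fst (V \<omega>) - snd (V \<omega>)))\<^sup>2)"
    and integral_distr_coupling_cost:
      "(\<integral>\<omega>. (norm (fst (V \<omega>) - snd (V \<omega>)))\<^sup>2 \<partial>\<Gamma>) = (\<integral>z. (norm (fst z - snd z))\<^sup>2 \<partial>g)"
proof -
  have cost: "(\<lambda>z::'b \<times> 'b. (norm (fst z - snd z))\<^sup>2) \<in> borel_measurable (borel \<Otimes>\<^sub>M borel)"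
    by measurable
  show "integrable g (\<lambda>z. (norm (fst z - snd z))\<^sup>2) \<Longrightarrow>
      integrable \<Gamma> (\<lambda>\<omega>. (norm (fst (V \<omega>) - snd (V \<omega>)))\<^sup>2)"
    using integrable_distr_eq[OF V_meas cost] unfolding V by simp
  show "(\<integral>\<omega>. (norm (fst (V \<omega>) - snd (V \<omega>)))\<^sup>2 \<partial>\<Gamma>) = (\<integral>z. (norm (fst z - snd z))\<^sup>2 \<partial>g)"
    using integral_distr[OF V_meas cost] unfolding V by simp
qed

lemma W2sq_le_glued_cost:
  fixes P M Q :: "'b::euclidean_space measure"
  assumes g1: "g1 \<in> couplings P M" and g2: "g2 \<in> couplings M Q"
    and mom: "integrable P (\<lambda>x. (norm x)\<^sup>2)" "integrable M (\<lambda>x. (norm x)\<^sup>2)" "integrable Q (\<lambda>x. (norm x)\<^sup>2)"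
    and "d > 0"
  shows "sqrt (W2sq P Q)
    \<le> sqrt (\<integral>z. (norm (fst z - snd z))\<^sup>2 \<partial>g1) + d + sqrt (\<integral>z. (norm (fst z - snd z))\<^sup>2 \<partial>g2)"
proof -
  note g1D = couplingsD[OF g1] and g2D = couplingsD[OF g2]
  obtain \<Gamma> where \<Gamma>: "prob_space \<Gamma>" "sets \<Gamma> = sets (g1 \<Otimes>\<^sub>M g2)"
    "distr \<Gamma> (borel \<Otimes>\<^sub>M borel) fst = g1" "distr \<Gamma> (borel \<Otimes>\<^sub>M borel) snd = g2"
    "AE \<omega> in \<Gamma>. dist (snd (fst \<omega>)) (fst (snd \<omega>)) < d"
    using exists_gluing[OF g1 g2 \<open>d > 0\<close>] by blast
  interpret \<Gamma>: prob_space \<Gamma> by (fact \<Gamma>(1))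
  have sets_\<Gamma>: "sets \<Gamma> = sets ((borel \<Otimes>\<^sub>M borel) \<Otimes>\<^sub>M (borel \<Otimes>\<^sub>M borel))"
    using \<Gamma>(2) sets_pair_measure_cong[OF g1D(2) g2D(2)] by simp
  have fst_snd [measurable]: "fst \<in> \<Gamma> \<rightarrow>\<^sub>M borel \<Otimes>\<^sub>M borel" "snd \<in> \<Gamma> \<rightarrow>\<^sub>M borel \<Otimes>\<^sub>M borel"
    by (simp_all add: measurable_cong_sets[OF sets_\<Gamma> refl])
  have meas: "(\<lambda>\<omega>. fst (fst \<omega>)) \<in> borel_measurable \<Gamma>" "(\<lambda>\<omega>. snd (fst \<omega>)) \<in> borel_measurable \<Gamma>"
    "(\<lambda>\<omega>. fst (snd \<omega>)) \<in> borel_measurable \<Gamma>" "(\<lambda>\<omega>. snd (snd \<omega>)) \<in> borel_measurable \<Gamma>"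
    by measurable
  note XZ = integrable_distr_coupling_cost[OF fst_snd(1) \<Gamma>(3) integrable_coupling_cost[OF g1 mom(1,2)]]
    integral_distr_coupling_cost[OF fst_snd(1) \<Gamma>(3)]
  note Z'Y = integrable_distr_coupling_cost[OF fst_snd(2) \<Gamma>(4) integrable_coupling_cost[OF g2 mom(2,3)]]
    integral_distr_coupling_cost[OF fst_snd(2) \<Gamma>(4)]
  note ZZ' = \<Gamma>.sqrt_integral_norm_diff_square_le[OF meas(2,3) \<Gamma>(5)]
  note XZ' = integrable_norm_diff_square_trans[OF meas(1-3) XZ(1) ZZ'(1)]
    sqrt_integral_norm_diff_square_triangle[OF meas(1-3) XZ(1) ZZ'(1)]
  note XY = integrable_norm_diff_square_trans[OF meas(1,3,4) XZ'(1) Z'Y(1)]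
    sqrt_integral_norm_diff_square_triangle[OF meas(1,3,4) XZ'(1) Z'Y(1)]
  have "distr \<Gamma> borel (\<lambda>\<omega>. fst (fst \<omega>)) = P" "distr \<Gamma> borel (\<lambda>\<omega>. snd (snd \<omega>)) = Q"
    using distr_distr[of fst "borel \<Otimes>\<^sub>M borel" borel fst \<Gamma>] distr_distr[of snd "borel \<Otimes>\<^sub>M borel" borel snd \<Gamma>]
      \<Gamma>(3,4) g1D(3) g2D(4) by (simp_all add: comp_def)
  then have "sqrt (W2sq P Q) \<le> sqrt (\<integral>\<omega>. (norm (fst (fst \<omega>) - snd (snd \<omega>)))\<^sup>2 \<partial>\<Gamma>)"
    by (intro sqrt_W2sq_le_L2_dist[OF \<Gamma>(1) meas(1,4) _ _ XY(1)])
  then show ?thesis using XY(2)[unfolded Z'Y(2)] XZ'(2)[unfolded XZ(2)] ZZ'(2) by linarith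
qed

lemma sqrt_W2sq_triangle:
  fixes P M Q :: "'b::euclidean_space measure"
  assumes P: "prob_space P" "sets P = sets borel" and M: "prob_space M" "sets M = sets borel"
    and Q: "prob_space Q" "sets Q = sets borel"
    and mom: "integrable P (\<lambda>x. (norm x)\<^sup>2)" "integrable M (\<lambda>x. (norm x)\<^sup>2)" "integrable Q (\<lambda>x. (norm x)\<^sup>2)"
  shows "sqrt (W2sq P Q) \<le> sqrt (W2sq P M) + sqrt (W2sq M Q)"
proof (rule le_of_tendsto_at_right_0)
  fix e :: real assume "e > 0"
  obtain g1 where g1: "g1 \<in> couplings P M" "(\<integral>z. (norm (fst z - snd z))\<^sup>2 \<partial>g1) \<le> W2sq P M + e"
    using exists_coupling_cost_le_W2sq_add[OF P M mom(1,2) \<open>e > 0\<close>] by blast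
  obtain g2 where g2: "g2 \<in> couplings M Q" "(\<integral>z. (norm (fst z - snd z))\<^sup>2 \<partial>g2) \<le> W2sq M Q + e"
    using exists_coupling_cost_le_W2sq_add[OF M Q mom(2,3) \<open>e > 0\<close>] by blast
  have "sqrt (W2sq P Q)
      \<le> sqrt (\<integral>z. (norm (fst z - snd z))\<^sup>2 \<partial>g1) + e + sqrt (\<integral>z. (norm (fst z - snd z))\<^sup>2 \<partial>g2)"
    by (rule W2sq_le_glued_cost[OF g1(1) g2(1) mom \<open>e > 0\<close>])
  also have "\<dots> \<le> sqrt (W2sq P M + e) + e + sqrt (W2sq M Q + e)"
    using g1(2) g2(2) by (intro add_mono real_sqrt_le_mono order_refl)
  finally show "sqrt (W2sq P Q) \<le> sqrt (W2sq P M + e) + e + sqrt (W2sq M Q + e)" .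
next
  show "((\<lambda>e. sqrt (W2sq P M + e) + e + sqrt (W2sq M Q + e)) \<longlongrightarrow> sqrt (W2sq P M) + sqrt (W2sq M Q))
      (at_right 0)"
    by (auto intro!: tendsto_eq_intros)
qed

section \<open>Regular densities and the Jeffreys divergence\<close>

definition log_grad_bounded :: "real \<Rightarrow> real \<Rightarrow> ('b::euclidean_space \<Rightarrow> real) \<Rightarrow> bool" where
  "log_grad_bounded c1 c2 p \<longleftrightarrow>
     (\<forall>x. \<exists>grad. ((\<lambda>y. log 2 (p y)) has_derivative (\<lambda>v. grad \<bullet> v)) (at x) \<and> norm grad \<le> c1 * norm x + c2)"

lemma regularE:
  assumes "regular c1 c2 P"
  obtains p where "p \<in> borel_measurable borel" "\<And>x. p x > 0" "P = density lborel (\<lambda>x. ennreal (p x))"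
    "log_grad_bounded c1 c2 p"
  using assms unfolding regular_def log_grad_bounded_def by blast

lemma log_grad_boundedE:
  assumes "log_grad_bounded c1 c2 p"
  obtains G where "\<And>x. ((\<lambda>y. log 2 (p y)) has_derivative (\<lambda>v. G x \<bullet> v)) (at x)"
    "\<And>x. norm (G x) \<le> c1 * norm x + c2"
  using assms unfolding log_grad_bounded_def by metis

lemma log_grad_bounded_nonneg:
  fixes p :: "'b::euclidean_space \<Rightarrow> real"
  assumes "log_grad_bounded c1 c2 p"
  shows "c1 \<ge> 0" "c2 \<ge> 0"
proof -
  obtain G :: "'b \<Rightarrow> 'b" where G: "\<And>x. norm (G x) \<le> c1 * norm x + c2"
    using log_grad_boundedE[OF assms] by blast
  have "norm (G 0) \<le> c2" using G[of 0] by simp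
  then show "c2 \<ge> 0" using norm_ge_zero[of "G 0"] by linarith
  show "c1 \<ge> 0"
  proof (rule ccontr)
    assume "\<not> c1 \<ge> 0"
    obtain b :: 'b where "b \<in> Basis" using nonempty_Basis by blast
    \<comment> \<open>far out along a unit vector the bound \<open>c1 * norm x + c2\<close> becomes negative\<close>
    define t where "t = (\<bar>c2\<bar> + 1) / (- c1)"
    have "t > 0" using \<open>\<not> c1 \<ge> 0\<close> divide_pos_neg[of "\<bar>c2\<bar> + 1" c1] by (simp add: t_def)
    have "c1 * t = - (\<bar>c2\<bar> + 1)" using \<open>\<not> c1 \<ge> 0\<close> by (simp add: t_def)
    then have "norm (G (t *\<^sub>R b)) \<le> - (\<bar>c2\<bar> + 1) + c2"
      using G[of "t *\<^sub>R b"] \<open>b \<in> Basis\<close> \<open>t > 0\<close> by simp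
    then show False using norm_ge_zero[of "G (t *\<^sub>R b)"] by linarith
  qed
qed


lemma regular_nonneg:
  assumes "regular c1 c2 (P :: 'b::euclidean_space measure)"
  shows "c1 \<ge> 0" "c2 \<ge> 0"
proof -
  obtain p :: "'b \<Rightarrow> real" where "log_grad_bounded c1 c2 p" using regularE[OF assms] by blast
  then show "c1 \<ge> 0" "c2 \<ge> 0" by (rule log_grad_bounded_nonneg)+
qed

lemma abs_diff_le_of_abs_deriv_le:
  fixes h k :: "real \<Rightarrow> real"
  assumes h: "\<And>t. (h has_real_derivative h' t) (at t)" and k: "\<And>t. (k has_real_derivative k' t) (at t)"
    and le: "\<And>t. 0 \<le> t \<Longrightarrow> t \<le> 1 \<Longrightarrow> \<bar>h' t\<bar> \<le> k' t"
  shows "\<bar>h 1 - h 0\<bar> \<le> k 1 - k 0"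
proof -
  have "k 0 - h 0 \<le> k 1 - h 1"
  proof (rule DERIV_nonneg_imp_nondecreasing[of 0 1 "\<lambda>t. k t - h t"])
    fix t :: real assume "0 \<le> t" "t \<le> 1"
    then show "\<exists>D. ((\<lambda>t. k t - h t) has_real_derivative D) (at t) \<and> D \<ge> 0"
      using le[of t] by (intro exI conjI) (rule DERIV_diff[OF k h], simp)
  qed simp
  moreover have "k 0 + h 0 \<le> k 1 + h 1"
  proof (rule DERIV_nonneg_imp_nondecreasing[of 0 1 "\<lambda>t. k t + h t"])
    fix t :: real assume "0 \<le> t" "t \<le> 1"
    then show "\<exists>D. ((\<lambda>t. k t + h t) has_real_derivative D) (at t) \<and> D \<ge> 0"
      using le[of t] by (intro exI conjI) (rule DERIV_add[OF k h], simp)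
  qed simp
  ultimately show ?thesis by linarith
qed

lemma log_grad_bounded_log_diff_le:
  fixes p :: "'b::euclidean_space \<Rightarrow> real"
  assumes "log_grad_bounded c1 c2 p"
  shows "\<bar>log 2 (p x) - log 2 (p y)\<bar> \<le> (c1 * (norm x + norm y) / 2 + c2) * norm (x - y)"
proof -
  obtain G where grad: "\<And>z. ((\<lambda>y. log 2 (p y)) has_derivative (\<lambda>v. G z \<bullet> v)) (at z)"
    and bnd: "\<And>z. norm (G z) \<le> c1 * norm z + c2"
    using log_grad_boundedE[OF assms] by blast
  have "c1 \<ge> 0" by (rule log_grad_bounded_nonneg[OF assms])
  define z where "z t = y + t *\<^sub>R (x - y)" for t :: real
  \<comment> \<open>\<open>k\<close> is a primitive of the bound on the directional derivative along the segment\<close>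
  define k where "k t = (c1 * (norm y * t + (norm x - norm y) * t\<^sup>2 / 2) + c2 * t) * norm (x - y)" for t
  have "((\<lambda>t. log 2 (p (z t))) has_real_derivative (G (z t) \<bullet> (x - y))) (at t)" for t
  proof -
    have "((\<lambda>t. log 2 (p (z t))) has_derivative (\<lambda>s. G (z t) \<bullet> (s *\<^sub>R (x - y)))) (at t)"
      unfolding z_def by (rule diff_chain_at[OF _ grad, unfolded o_def]) (auto intro!: derivative_eq_intros)
    moreover have "(\<lambda>s. G (z t) \<bullet> (s *\<^sub>R (x - y))) = (*) (G (z t) \<bullet> (x - y))"
      by (simp add: fun_eq_iff)
    ultimately show ?thesis unfolding has_field_derivative_def by simp
  qed
  moreover have "(k has_real_derivative ((c1 * (norm y + (norm x - norm y) * t) + c2) * norm (x - y))) (at t)"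
    for t unfolding k_def by (auto intro!: derivative_eq_intros simp: field_simps)
  moreover have "\<bar>G (z t) \<bullet> (x - y)\<bar> \<le> (c1 * (norm y + (norm x - norm y) * t) + c2) * norm (x - y)"
    if "0 \<le> t" "t \<le> 1" for t
  proof -
    have "norm (z t) \<le> norm ((1 - t) *\<^sub>R y) + norm (t *\<^sub>R x)"
      unfolding z_def by (rule order_trans[OF _ norm_triangle_ineq]) (simp add: algebra_simps)
    also have "\<dots> = norm y + (norm x - norm y) * t"
      using that by (simp only: norm_scaleR) (simp add: algebra_simps)
    finally have "c1 * norm (z t) + c2 \<le> c1 * (norm y + (norm x - norm y) * t) + c2"
      using \<open>c1 \<ge> 0\<close> by (simp add: mult_left_mono)
    then show ?thesis
      using Cauchy_Schwarz_ineq2[of "G (z t)" "x - y"] bnd[of "z t"]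
      by (meson mult_right_mono norm_ge_zero order_trans)
  qed
  ultimately have "\<bar>log 2 (p (z 1)) - log 2 (p (z 0))\<bar> \<le> k 1 - k 0"
    by (rule abs_diff_le_of_abs_deriv_le)
  moreover have "k 1 - k 0 = (c1 * (norm x + norm y) / 2 + c2) * norm (x - y)"
    by (simp add: k_def field_simps)
  ultimately show ?thesis by (simp add: z_def)
qed

text \<open>The Jeffreys divergence is the symmetrised Kullback-Leibler divergence
  \<open>KL(p \<parallel> q) + KL(q \<parallel> p)\<close>.\<close>

definition jeffreys :: "('b::euclidean_space \<Rightarrow> real) \<Rightarrow> ('b \<Rightarrow> real) \<Rightarrow> real" where
  "jeffreys p q = (\<integral>x. (p x - q x) * (ln (p x) - ln (q x)) \<partial>lborel)"

lemma jeffreys_integrand_nonneg: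
  assumes "a > 0" "b > 0" shows "(a - b) * (ln a - ln b) \<ge> (0::real)"
  using assms by (cases "a \<le> b") (auto intro: mult_nonpos_nonpos)

lemma jeffreys_nonneg:
  assumes "\<And>x. p x > 0" "\<And>x. q x > 0" shows "jeffreys p q \<ge> 0"
  unfolding jeffreys_def using assms by (intro integral_nonneg_AE AE_I2 jeffreys_integrand_nonneg)

lemma integrable_of_density_prob_space:
  fixes p :: "'b::euclidean_space \<Rightarrow> real"
  assumes "p \<in> borel_measurable borel" "\<And>x. p x > 0" "prob_space (density lborel (\<lambda>x. ennreal (p x)))"
  shows "integrable lborel p" "(\<integral>x. p x \<partial>lborel) = 1"
proof -
  have "(\<integral>\<^sup>+x. ennreal (p x) \<partial>lborel) = 1"
    using prob_space.emeasure_space_1[OF assms(3)] assms(1) by (simp add: emeasure_density)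
  then show "integrable lborel p" "(\<integral>x. p x \<partial>lborel) = 1"
    using assms(1,2) by (auto intro!: integrableI_nonneg less_imp_le)
      (subst integral_eq_nn_integral, auto intro: less_imp_le)
qed

lemma integral_max_diff_0_le_sqrt_jeffreys:
  fixes p q :: "'b::euclidean_space \<Rightarrow> real"
  assumes p: "p \<in> borel_measurable borel" "\<And>x. p x > 0" "prob_space (density lborel (\<lambda>x. ennreal (p x)))"
    and q: "q \<in> borel_measurable borel" "\<And>x. q x > 0"
    and J: "integrable lborel (\<lambda>x. (p x - q x) * (ln (p x) - ln (q x)))"
  shows "integrable lborel (\<lambda>x. max (p x - q x) 0)"
    and "(\<integral>x. max (p x - q x) 0 \<partial>lborel) \<le> sqrt (jeffreys p q)"
proof -
  note p_int = integrable_of_density_prob_space[OF p]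
  show int: "integrable lborel (\<lambda>x. max (p x - q x) 0)"
    using p q by (intro Bochner_Integration.integrable_bound[OF p_int(1)]) (auto simp: less_imp_le)
  show "(\<integral>x. max (p x - q x) 0 \<partial>lborel) \<le> sqrt (jeffreys p q)"
  proof (rule le_sqrt_of_le_AM_GM_family)
    show "jeffreys p q \<ge> 0" using p(2) q(2) by (rule jeffreys_nonneg)
    fix t :: real assume "t > 0"
    have "(\<integral>x. max (p x - q x) 0 \<partial>lborel)
        \<le> (\<integral>x. ((p x - q x) * (ln (p x) - ln (q x)) / t + t * p x) / 2 \<partial>lborel)"
      using int J p_int(1) max_diff_0_le_ln_diff[OF p(2) q(2) \<open>t > 0\<close>] by (intro integral_mono) auto
    also have "\<dots> = (jeffreys p q / t + t) / 2"
      using J p_int by (simp add: jeffreys_def)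
    finally show "(\<integral>x. max (p x - q x) 0 \<partial>lborel) \<le> (jeffreys p q / t + t) / 2" .
  qed
qed

lemma integral_density_diff_le_sqrt_jeffreys:
  fixes p q :: "'b::euclidean_space \<Rightarrow> real" and phi :: "'b \<Rightarrow> real"
  assumes p: "p \<in> borel_measurable borel" "\<And>x. p x > 0" "prob_space (density lborel (\<lambda>x. ennreal (p x)))"
    and q: "q \<in> borel_measurable borel" "\<And>x. q x > 0" "prob_space (density lborel (\<lambda>x. ennreal (q x)))"
    and phi: "phi \<in> borel_measurable borel" "\<And>y. 0 \<le> phi y" "\<And>y. phi y \<le> L"
    and J: "integrable lborel (\<lambda>x. (p x - q x) * (ln (p x) - ln (q x)))"
  shows "(\<integral>y. phi y \<partial>density lborel (\<lambda>x. ennreal (p x))) - (\<integral>y. phi y \<partial>density lborel (\<lambda>x. ennreal (q x)))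
     \<le> L * sqrt (jeffreys p q)"
proof -
  have "L \<ge> 0" using phi(2,3) order_trans by blast
  have int: "integrable lborel (\<lambda>x. r x * phi x)"
    if "r \<in> borel_measurable borel" "\<And>x. r x > 0" "prob_space (density lborel (\<lambda>x. ennreal (r x)))" for r
  proof (rule Bochner_Integration.integrable_bound[where f = "\<lambda>x. L * r x"])
    show "integrable lborel (\<lambda>x. L * r x)"
      using integrable_of_density_prob_space(1)[OF that] by simp
    show "(\<lambda>x. r x * phi x) \<in> borel_measurable lborel" using that(1) phi(1) by simp
    have "\<bar>r x * phi x\<bar> \<le> \<bar>L * r x\<bar>" for x
      using mult_left_mono[OF phi(3) less_imp_le[OF that(2)], of x] that(2)[of x] phi(2)[of x] \<open>L \<ge> 0\<close>
      by (simp add: mult.commute)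
    then show "AE x in lborel. norm (r x * phi x) \<le> norm (L * r x)" by simp
  qed
  have "(\<integral>y. phi y \<partial>density lborel (\<lambda>x. ennreal (p x))) - (\<integral>y. phi y \<partial>density lborel (\<lambda>x. ennreal (q x)))
      = (\<integral>x. p x * phi x - q x * phi x \<partial>lborel)"
    using p q phi int[OF p] int[OF q] by (simp add: integral_density less_imp_le)
  also have "\<dots> \<le> (\<integral>x. L * max (p x - q x) 0 \<partial>lborel)"
  proof (rule integral_mono)
    show "integrable lborel (\<lambda>x. p x * phi x - q x * phi x)" using int[OF p] int[OF q] by simp
    show "integrable lborel (\<lambda>x. L * max (p x - q x) 0)"
      using integral_max_diff_0_le_sqrt_jeffreys(1)[OF p q(1,2) J] by simp
    fix x
    have "p x * phi x - q x * phi x = phi x * (p x - q x)" by (simp add: algebra_simps)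
    also have "\<dots> \<le> phi x * max (p x - q x) 0" using phi(2)[of x] by (intro mult_left_mono) auto
    also have "\<dots> \<le> L * max (p x - q x) 0" using phi(3)[of x] by (intro mult_right_mono) auto
    finally show "p x * phi x - q x * phi x \<le> L * max (p x - q x) 0" .
  qed
  also have "\<dots> \<le> L * sqrt (jeffreys p q)"
    using integral_max_diff_0_le_sqrt_jeffreys(2)[OF p q(1,2) J] \<open>L \<ge> 0\<close> by (simp add: mult_left_mono)
  finally show ?thesis .
qed

lemma integrable_of_diff_le_growth:
  fixes F :: "'b::euclidean_space \<Rightarrow> real"
  assumes F: "F \<in> borel_measurable borel" "\<And>x y. \<bar>F x - F y\<bar> \<le> (a * (norm x + norm y) + b) * norm (x - y)"
    and ab: "a \<ge> 0" "b \<ge> 0"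
    and M: "finite_measure M" "sets M = sets borel" "integrable M (\<lambda>x. (norm x)\<^sup>2)"
  shows "integrable M F"
proof (rule Bochner_Integration.integrable_bound)
  interpret finite_measure M by fact
  show "integrable M (\<lambda>x. \<bar>F 0\<bar> + b + (a + b) * (norm x)\<^sup>2)"
    using M(3) by auto
  show "F \<in> borel_measurable M" using F(1) by (simp add: measurable_cong_sets[OF M(2) refl])
  have "\<bar>F x\<bar> \<le> \<bar>F 0\<bar> + b + (a + b) * (norm x)\<^sup>2" for x
  proof -
    have "\<bar>F x - F 0\<bar> \<le> a * (norm x)\<^sup>2 + b * norm x"
      using F(2)[of x 0] by (simp add: power2_eq_square algebra_simps)
    also have "\<dots> \<le> a * (norm x)\<^sup>2 + b * (1 + (norm x)\<^sup>2)"
    proof -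
      have "norm x \<le> 1 + (norm x)\<^sup>2"
        using sum_squares_bound[of "norm x" 1] norm_ge_zero[of x] by (simp only: mult_1_right power_one)
      then show ?thesis using ab by (intro add_left_mono mult_left_mono)
    qed
    finally show ?thesis by (simp add: algebra_simps)
  qed
  then show "AE x in M. norm (F x) \<le> norm (\<bar>F 0\<bar> + b + (a + b) * (norm x)\<^sup>2)"
    using ab by (intro AE_I2) auto
qed

lemma (in prob_space) integral_diff_le_of_diff_le:
  fixes F :: "'b::euclidean_space \<Rightarrow> real" and X Y :: "'a \<Rightarrow> 'b"
  assumes F: "\<And>x y. \<bar>F x - F y\<bar> \<le> (a * (norm x + norm y) + b) * norm (x - y)" and ab: "a \<ge> 0" "b \<ge> 0"
    and [measurable]: "X \<in> borel_measurable M" "Y \<in> borel_measurable M"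
    and int: "integrable M (\<lambda>\<omega>. F (X \<omega>))" "integrable M (\<lambda>\<omega>. F (Y \<omega>))"
    and sq: "integrable M (\<lambda>\<omega>. (norm (X \<omega>))\<^sup>2)" "integrable M (\<lambda>\<omega>. (norm (Y \<omega>))\<^sup>2)"
      "integrable M (\<lambda>\<omega>. (norm (X \<omega> - Y \<omega>))\<^sup>2)"
  shows "(\<integral>\<omega>. F (X \<omega>) \<partial>M) - (\<integral>\<omega>. F (Y \<omega>) \<partial>M)
    \<le> (a * (sqrt (\<integral>\<omega>. (norm (X \<omega>))\<^sup>2 \<partial>M) + sqrt (\<integral>\<omega>. (norm (Y \<omega>))\<^sup>2 \<partial>M)) + b)
       * sqrt (\<integral>\<omega>. (norm (X \<omega> - Y \<omega>))\<^sup>2 \<partial>M)"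
proof -
  define D where "D \<omega> = norm (X \<omega> - Y \<omega>)" for \<omega>
  have [measurable]: "D \<in> borel_measurable M" unfolding D_def by measurable
  have D2: "integrable M (\<lambda>\<omega>. (D \<omega>)\<^sup>2)" using sq(3) by (simp add: D_def)
  have one: "integrable M (\<lambda>\<omega>. (1::real)\<^sup>2)" by simp
  note cs_int = integrable_mult_of_square_integrable and cs = integral_mult_le_sqrt_integral_square
  have ints: "integrable M (\<lambda>\<omega>. norm (X \<omega>) * D \<omega>)" "integrable M (\<lambda>\<omega>. norm (Y \<omega>) * D \<omega>)"
      "integrable M (\<lambda>\<omega>. 1 * D \<omega>)"
    using cs_int[OF _ _ sq(1) D2] cs_int[OF _ _ sq(2) D2] cs_int[OF _ _ one D2] by simp_all
  have "(\<integral>\<omega>. F (X \<omega>) \<partial>M) - (\<integral>\<omega>. F (Y \<omega>) \<partial>M)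
      \<le> (\<integral>\<omega>. a * (norm (X \<omega>) * D \<omega>) + a * (norm (Y \<omega>) * D \<omega>) + b * (1 * D \<omega>) \<partial>M)"
    unfolding Bochner_Integration.integral_diff[OF int, symmetric]
  proof (rule integral_mono)
    fix \<omega>
    have "F (X \<omega>) - F (Y \<omega>) \<le> (a * (norm (X \<omega>) + norm (Y \<omega>)) + b) * D \<omega>"
      using F[of "X \<omega>" "Y \<omega>"] unfolding D_def by linarith
    then show "F (X \<omega>) - F (Y \<omega>) \<le> a * (norm (X \<omega>) * D \<omega>) + a * (norm (Y \<omega>) * D \<omega>) + b * (1 * D \<omega>)"
      by (simp add: algebra_simps)
  qed (use int ints in auto)
  also have "\<dots> = a * (\<integral>\<omega>. norm (X \<omega>) * D \<omega> \<partial>M) + a * (\<integral>\<omega>. norm (Y \<omega>) * D \<omega> \<partial>M)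
      + b * (\<integral>\<omega>. 1 * D \<omega> \<partial>M)"
    using ints by simp
  also have "\<dots> \<le> a * (sqrt (\<integral>\<omega>. (norm (X \<omega>))\<^sup>2 \<partial>M) * sqrt (\<integral>\<omega>. (D \<omega>)\<^sup>2 \<partial>M))
      + a * (sqrt (\<integral>\<omega>. (norm (Y \<omega>))\<^sup>2 \<partial>M) * sqrt (\<integral>\<omega>. (D \<omega>)\<^sup>2 \<partial>M))
      + b * (1 * sqrt (\<integral>\<omega>. (D \<omega>)\<^sup>2 \<partial>M))"
    using cs[OF _ _ sq(1) D2] cs[OF _ _ sq(2) D2] cs[OF _ _ one D2] ab
    by (intro add_mono mult_left_mono) (auto simp: prob_space)
  finally show ?thesis by (simp add: D_def algebra_simps)
qed

lemma
  fixes p q :: "'b::euclidean_space \<Rightarrow> real"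
  defines "P \<equiv> density lborel (\<lambda>x. ennreal (p x))" and "Q \<equiv> density lborel (\<lambda>x. ennreal (q x))"
    and "F \<equiv> \<lambda>x. log 2 (p x) - log 2 (q x)"
  assumes p: "p \<in> borel_measurable borel" "\<And>x. p x > 0" and q: "q \<in> borel_measurable borel" "\<And>x. q x > 0"
    and F_int: "integrable P F" "integrable Q F"
  shows integrable_jeffreys_integrand: "integrable lborel (\<lambda>x. (p x - q x) * (ln (p x) - ln (q x)))"
    and jeffreys_le_integral_log_ratio_diff: "jeffreys p q \<le> (\<integral>x. F x \<partial>P) - (\<integral>x. F x \<partial>Q)"
proof -
  have F_meas: "F \<in> borel_measurable borel" unfolding F_def using p(1) q(1) by measurable
  have pF: "integrable lborel (\<lambda>x. p x * F x)" "(\<integral>x. F x \<partial>P) = (\<integral>x. p x * F x \<partial>lborel)"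
    and qF: "integrable lborel (\<lambda>x. q x * F x)" "(\<integral>x. F x \<partial>Q) = (\<integral>x. q x * F x \<partial>lborel)"
    using F_int F_meas p q by (simp_all add: P_def Q_def integrable_density integral_density less_imp_le)
  have integrand: "(p x - q x) * (ln (p x) - ln (q x)) = ln 2 * (p x * F x - q x * F x)" for x
    unfolding F_def log_def by (simp add: field_simps)
  show "integrable lborel (\<lambda>x. (p x - q x) * (ln (p x) - ln (q x)))"
    unfolding integrand using pF(1) qF(1) by auto
  have J: "jeffreys p q = ln 2 * ((\<integral>x. F x \<partial>P) - (\<integral>x. F x \<partial>Q))"
    unfolding jeffreys_def integrand pF(2) qF(2) using pF(1) qF(1) by simp
  then have "(\<integral>x. F x \<partial>P) - (\<integral>x. F x \<partial>Q) \<ge> 0"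
    using jeffreys_nonneg[of p q, OF p(2) q(2)] ln_gt_zero[of 2] by (simp add: zero_le_mult_iff)
  then show "jeffreys p q \<le> (\<integral>x. F x \<partial>P) - (\<integral>x. F x \<partial>Q)"
    unfolding J using ln_2_less_1 by (simp add: mult_left_le_one_le)
qed

lemma jeffreys_le_coupling_L2_dist:
  fixes p q :: "'b::euclidean_space \<Rightarrow> real" and X Y :: "'w \<Rightarrow> 'b"
  defines "P \<equiv> density lborel (\<lambda>x. ennreal (p x))" and "Q \<equiv> density lborel (\<lambda>x. ennreal (q x))"
  assumes p: "p \<in> borel_measurable borel" "\<And>x. p x > 0" "log_grad_bounded c1 c2 p"
    and q: "q \<in> borel_measurable borel" "\<And>x. q x > 0" "log_grad_bounded c1 c2 q"
    and PQ: "prob_space P" "prob_space Q" "integrable P (\<lambda>x. (norm x)\<^sup>2)" "integrable Q (\<lambda>x. (norm x)\<^sup>2)"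
    and \<Gamma>: "prob_space \<Gamma>" and [measurable]: "X \<in> \<Gamma> \<rightarrow>\<^sub>M borel" "Y \<in> \<Gamma> \<rightarrow>\<^sub>M borel"
    and XY: "distr \<Gamma> borel X = P" "distr \<Gamma> borel Y = Q" "integrable \<Gamma> (\<lambda>\<omega>. (norm (X \<omega> - Y \<omega>))\<^sup>2)"
  shows "integrable lborel (\<lambda>x. (p x - q x) * (ln (p x) - ln (q x)))"
    and "jeffreys p q \<le> (c1 * (sqrt (\<integral>x. (norm x)\<^sup>2 \<partial>P) + sqrt (\<integral>x. (norm x)\<^sup>2 \<partial>Q)) + 2 * c2)
        * sqrt (\<integral>\<omega>. (norm (X \<omega> - Y \<omega>))\<^sup>2 \<partial>\<Gamma>)"
proof -
  interpret \<Gamma>: prob_space \<Gamma> by fact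
  have c: "c1 \<ge> 0" "c2 \<ge> 0" using log_grad_bounded_nonneg[OF p(3)] by auto
  define F where "F x = log 2 (p x) - log 2 (q x)" for x
  have F_meas [measurable]: "F \<in> borel_measurable borel" unfolding F_def using p(1) q(1) by measurable
  have F_diff: "\<bar>F x - F y\<bar> \<le> (c1 * (norm x + norm y) + 2 * c2) * norm (x - y)" for x y
  proof -
    have "\<bar>F x - F y\<bar> \<le> 2 * ((c1 * (norm x + norm y) / 2 + c2) * norm (x - y))"
      using log_grad_bounded_log_diff_le[OF p(3), of x y] log_grad_bounded_log_diff_le[OF q(3), of x y]
      unfolding F_def by linarith
    also have "\<dots> = (c1 * (norm x + norm y) + 2 * c2) * norm (x - y)" by (simp add: field_simps)
    finally show ?thesis .
  qed
  have F_int: "integrable P F" "integrable Q F"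
    using c PQ by (auto intro!: integrable_of_diff_le_growth[OF _ F_diff] prob_space.finite_measure
        simp: P_def Q_def)
  show "integrable lborel (\<lambda>x. (p x - q x) * (ln (p x) - ln (q x)))"
    using integrable_jeffreys_integrand[OF p(1,2) q(1,2)] F_int unfolding P_def Q_def F_def by blast
  have "jeffreys p q \<le> (\<integral>x. F x \<partial>P) - (\<integral>x. F x \<partial>Q)"
    using jeffreys_le_integral_log_ratio_diff[OF p(1,2) q(1,2)] F_int unfolding P_def Q_def F_def by blast
  also have "\<dots> = (\<integral>\<omega>. F (X \<omega>) \<partial>\<Gamma>) - (\<integral>\<omega>. F (Y \<omega>) \<partial>\<Gamma>)"
    using integral_distr[of X \<Gamma> borel F] integral_distr[of Y \<Gamma> borel F] XY(1,2) by simp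
  also have "\<dots> \<le> (c1 * (sqrt (\<integral>\<omega>. (norm (X \<omega>))\<^sup>2 \<partial>\<Gamma>) + sqrt (\<integral>\<omega>. (norm (Y \<omega>))\<^sup>2 \<partial>\<Gamma>)) + 2 * c2)
        * sqrt (\<integral>\<omega>. (norm (X \<omega> - Y \<omega>))\<^sup>2 \<partial>\<Gamma>)"
  proof (rule \<Gamma>.integral_diff_le_of_diff_le[OF F_diff])
    have n2: "(\<lambda>x::'b. (norm x)\<^sup>2) \<in> borel_measurable borel" by measurable
    show "integrable \<Gamma> (\<lambda>\<omega>. F (X \<omega>))" "integrable \<Gamma> (\<lambda>\<omega>. F (Y \<omega>))"
      "integrable \<Gamma> (\<lambda>\<omega>. (norm (X \<omega>))\<^sup>2)" "integrable \<Gamma> (\<lambda>\<omega>. (norm (Y \<omega>))\<^sup>2)"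
      using integrable_distr_eq[of X \<Gamma> borel, OF _ F_meas] integrable_distr_eq[of Y \<Gamma> borel, OF _ F_meas]
        integrable_distr_eq[of X \<Gamma> borel, OF _ n2] integrable_distr_eq[of Y \<Gamma> borel, OF _ n2]
        F_int PQ(3,4) XY(1,2) by simp_all
  qed (use c XY(3) in simp_all)
  also have "\<dots> = (c1 * (sqrt (\<integral>x. (norm x)\<^sup>2 \<partial>P) + sqrt (\<integral>x. (norm x)\<^sup>2 \<partial>Q)) + 2 * c2)
        * sqrt (\<integral>\<omega>. (norm (X \<omega> - Y \<omega>))\<^sup>2 \<partial>\<Gamma>)"
    using integral_distr[of X \<Gamma> borel "\<lambda>x. (norm x)\<^sup>2"] integral_distr[of Y \<Gamma> borel "\<lambda>x. (norm x)\<^sup>2"]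
      XY(1,2) by simp
  finally show "jeffreys p q \<le> (c1 * (sqrt (\<integral>x. (norm x)\<^sup>2 \<partial>P) + sqrt (\<integral>x. (norm x)\<^sup>2 \<partial>Q)) + 2 * c2)
        * sqrt (\<integral>\<omega>. (norm (X \<omega> - Y \<omega>))\<^sup>2 \<partial>\<Gamma>)" .
qed

lemma jeffreys_le_W2sq:
  fixes p q :: "'b::euclidean_space \<Rightarrow> real"
  defines "P \<equiv> density lborel (\<lambda>x. ennreal (p x))" and "Q \<equiv> density lborel (\<lambda>x. ennreal (q x))"
  assumes p: "p \<in> borel_measurable borel" "\<And>x. p x > 0" "log_grad_bounded c1 c2 p"
    and q: "q \<in> borel_measurable borel" "\<And>x. q x > 0" "log_grad_bounded c1 c2 q"
    and PQ: "prob_space P" "prob_space Q" "integrable P (\<lambda>x. (norm x)\<^sup>2)" "integrable Q (\<lambda>x. (norm x)\<^sup>2)"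
  shows "integrable lborel (\<lambda>x. (p x - q x) * (ln (p x) - ln (q x)))"
    and "jeffreys p q \<le> (c1 * (sqrt (\<integral>x. (norm x)\<^sup>2 \<partial>P) + sqrt (\<integral>x. (norm x)\<^sup>2 \<partial>Q)) + 2 * c2)
        * sqrt (W2sq P Q)"
proof -
  define K where "K = c1 * (sqrt (\<integral>x. (norm x)\<^sup>2 \<partial>P) + sqrt (\<integral>x. (norm x)\<^sup>2 \<partial>Q)) + 2 * c2"
  have sets: "sets P = sets borel" "sets Q = sets borel" by (simp_all add: P_def Q_def)
  have coupling_bound: "integrable lborel (\<lambda>x. (p x - q x) * (ln (p x) - ln (q x))) \<and>
      jeffreys p q \<le> K * sqrt (\<integral>z. (norm (fst z - snd z))\<^sup>2 \<partial>\<gamma>)" if "\<gamma> \<in> couplings P Q" for \<gamma>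
  proof -
    note \<gamma> = couplingsD[OF that]
    have [measurable]: "fst \<in> \<gamma> \<rightarrow>\<^sub>M borel" "snd \<in> \<gamma> \<rightarrow>\<^sub>M borel"
      by (simp_all add: measurable_cong_sets[OF \<gamma>(2) refl])
    show ?thesis
      using jeffreys_le_coupling_L2_dist[OF p q PQ[unfolded P_def Q_def] \<gamma>(1) _ _ \<gamma>(3,4)[unfolded P_def Q_def]
          integrable_coupling_cost[OF that PQ(3,4)]]
      unfolding K_def P_def Q_def by simp
  qed
  show "integrable lborel (\<lambda>x. (p x - q x) * (ln (p x) - ln (q x)))"
    using coupling_bound pair_measure_in_couplings[OF PQ(1) sets(1) PQ(2) sets(2)] by blast
  show "jeffreys p q \<le> K * sqrt (W2sq P Q)"
  proof (rule le_of_tendsto_at_right_0)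
    fix e :: real assume "e > 0"
    then obtain \<gamma> where \<gamma>: "\<gamma> \<in> couplings P Q" "(\<integral>z. (norm (fst z - snd z))\<^sup>2 \<partial>\<gamma>) \<le> W2sq P Q + e"
      using exists_coupling_cost_le_W2sq_add[OF PQ(1) sets(1) PQ(2) sets(2) PQ(3,4)] by blast
    have "K \<ge> 0" using log_grad_bounded_nonneg[OF p(3)] by (simp add: K_def)
    then show "jeffreys p q \<le> K * sqrt (W2sq P Q + e)"
      using coupling_bound[OF \<gamma>(1)] \<gamma>(2) by (meson mult_left_mono order_trans real_sqrt_le_mono)
  qed (auto intro!: tendsto_eq_intros)
qed

section \<open>The risk bound\<close>

lemma sqrt_mult_add_sqrt_le:
  fixes K a b :: real
  assumes "K \<ge> 0" "a \<ge> 0" "b \<ge> 0"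
  shows "sqrt (K * (sqrt a + sqrt b)) \<le> sqrt K * (a powr (1/4) + b powr (1/4))"
proof -
  have "sqrt (sqrt a + sqrt b) \<le> sqrt (sqrt a) + sqrt (sqrt b)"
    using assms by (intro sqrt_add_le_add_sqrt) auto
  then show ?thesis
    using assms by (simp add: real_sqrt_mult powr_quarter_eq_sqrt_sqrt mult_left_mono)
qed

lemma pushforward_prob_space:
  assumes "prob_space mu" "sets mu = sets borel" "f \<in> borel_measurable borel"
  shows "prob_space (pushforward f mu)" "sets (pushforward f mu) = sets borel"
  using assms unfolding pushforward_def
  by (auto intro!: prob_space.prob_space_distr simp: measurable_cong_sets[OF assms(2) refl])

lemma
  fixes mu :: "'a::topological_space measure" and f :: "'a \<Rightarrow> 'b::euclidean_space"
  assumes "sets mu = sets borel" "f \<in> borel_measurable borel"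
  shows integrable_pushforward_norm_square:
      "integrable mu (\<lambda>x. (norm (f x))\<^sup>2) \<Longrightarrow> integrable (pushforward f mu) (\<lambda>y. (norm y)\<^sup>2)"
    and integral_pushforward_norm_square:
      "(\<integral>y. (norm y)\<^sup>2 \<partial>pushforward f mu) = (\<integral>x. (norm (f x))\<^sup>2 \<partial>mu)"
proof -
  have fm: "f \<in> mu \<rightarrow>\<^sub>M borel" using assms by (simp add: measurable_cong_sets[OF assms(1) refl])
  have n2: "(\<lambda>y::'b. (norm y)\<^sup>2) \<in> borel_measurable borel" by measurable
  show "integrable mu (\<lambda>x. (norm (f x))\<^sup>2) \<Longrightarrow> integrable (pushforward f mu) (\<lambda>y. (norm y)\<^sup>2)"
    unfolding pushforward_def using integrable_distr_eq[OF fm n2] by simp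
  show "(\<integral>y. (norm y)\<^sup>2 \<partial>pushforward f mu) = (\<integral>x. (norm (f x))\<^sup>2 \<partial>mu)"
    unfolding pushforward_def using integral_distr[OF fm n2] by simp
qed

lemma regular_integral_diff_le_W2sq_quarter:
  fixes P1 P2 M :: "'b::euclidean_space measure" and phi :: "'b \<Rightarrow> real"
  assumes reg: "regular c1 c2 P1" "regular c1 c2 P2"
    and prob: "prob_space P1" "prob_space P2" "prob_space M" "sets M = sets borel"
    and mom: "integrable P1 (\<lambda>x. (norm x)\<^sup>2)" "integrable P2 (\<lambda>x. (norm x)\<^sup>2)" "integrable M (\<lambda>x. (norm x)\<^sup>2)"
    and phi: "phi \<in> borel_measurable borel" "\<And>y. 0 \<le> phi y" "\<And>y. phi y \<le> L"
  shows "(\<integral>y. phi y \<partial>P1) - (\<integral>y. phi y \<partial>P2) \<le>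
     L * sqrt (c1 * (sqrt (\<integral>x. (norm x)\<^sup>2 \<partial>P1) + sqrt (\<integral>x. (norm x)\<^sup>2 \<partial>P2)) + 2 * c2)
       * (W2sq P1 M powr (1/4) + W2sq M P2 powr (1/4))"
proof -
  define K where "K = c1 * (sqrt (\<integral>x. (norm x)\<^sup>2 \<partial>P1) + sqrt (\<integral>x. (norm x)\<^sup>2 \<partial>P2)) + 2 * c2"
  obtain p where p: "p \<in> borel_measurable borel" "\<And>x. p x > 0"
      "P1 = density lborel (\<lambda>x. ennreal (p x))" "log_grad_bounded c1 c2 p"
    using regularE[OF reg(1)] by metis
  obtain q where q: "q \<in> borel_measurable borel" "\<And>x. q x > 0"
      "P2 = density lborel (\<lambda>x. ennreal (q x))" "log_grad_bounded c1 c2 q"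
    using regularE[OF reg(2)] by metis
  note J = jeffreys_le_W2sq[OF p(1,2,4) q(1,2,4), folded p(3) q(3), OF prob(1,2) mom(1,2)]
  have "K \<ge> 0" using regular_nonneg[OF reg(1)] by (simp add: K_def)
  have "jeffreys p q \<le> K * sqrt (W2sq P1 P2)" using J(2) by (simp add: K_def)
  also have "\<dots> \<le> K * (sqrt (W2sq P1 M) + sqrt (W2sq M P2))"
    using sqrt_W2sq_triangle[OF prob(1) _ prob(3,4) prob(2) _ mom(1,3,2)] \<open>K \<ge> 0\<close> p(3) q(3)
    by (intro mult_left_mono) simp_all
  finally have "sqrt (jeffreys p q) \<le> sqrt (K * (sqrt (W2sq P1 M) + sqrt (W2sq M P2)))"
    by (rule real_sqrt_le_mono)
  also have "\<dots> \<le> sqrt K * (W2sq P1 M powr (1/4) + W2sq M P2 powr (1/4))"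
    by (rule sqrt_mult_add_sqrt_le[OF \<open>K \<ge> 0\<close>]) (simp_all add: W2sq_def)
  finally have "sqrt (jeffreys p q) \<le> sqrt K * (W2sq P1 M powr (1/4) + W2sq M P2 powr (1/4))" .
  moreover have "(\<integral>y. phi y \<partial>P1) - (\<integral>y. phi y \<partial>P2) \<le> L * sqrt (jeffreys p q)"
    unfolding p(3) q(3) using prob(1,2) J(1)
    by (intro integral_density_diff_le_sqrt_jeffreys[OF p(1,2) _ q(1,2) _ phi]) (simp_all add: p(3) q(3))
  moreover have "L \<ge> 0" using phi(2,3) order_trans by blast
  ultimately show ?thesis unfolding K_def by (smt (verit) mult.assoc mult_left_mono)
qed

lemma integral_diff_le_W2sq_quarter:
  fixes mu1 mu2 mu :: "'a::polish_space measure" and f :: "'a \<Rightarrow> 'b::euclidean_space"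
    and psi :: "'a \<Rightarrow> real"
  assumes mu: "prob_space mu1" "sets mu1 = sets borel" "prob_space mu2" "sets mu2 = sets borel"
      "prob_space mu" "sets mu = sets borel"
    and f: "f \<in> borel_measurable borel" "inj_on f (msupport mu1 \<union> msupport mu2)"
    and mom: "integrable mu1 (\<lambda>x. (norm (f x))\<^sup>2)" "integrable mu2 (\<lambda>x. (norm (f x))\<^sup>2)"
      "integrable mu (\<lambda>x. (norm (f x))\<^sup>2)"
    and reg: "regular c1 c2 (pushforward f mu1)" "regular c1 c2 (pushforward f mu2)"
    and psi: "psi \<in> borel_measurable borel" "\<And>x. 0 \<le> psi x" "\<And>x. psi x \<le> L"
  shows "(\<integral>x. psi x \<partial>mu1) - (\<integral>x. psi x \<partial>mu2) \<le>
     L * sqrt (c1 * (sqrt (\<integral>x. (norm (f x))\<^sup>2 \<partial>mu1) + sqrt (\<integral>x. (norm (f x))\<^sup>2 \<partial>mu2)) + 2 * c2)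
       * (W2sq (pushforward f mu1) (pushforward f mu) powr (1/4)
          + W2sq (pushforward f mu) (pushforward f mu2) powr (1/4))"
proof (rule integral_diff_le_of_pushforward_integral_diff_le[OF mu(1,3,2,4) f psi])
  fix phi :: "'b \<Rightarrow> real"
  assume "phi \<in> borel_measurable borel" "\<And>y. 0 \<le> phi y" "\<And>y. phi y \<le> L"
  then show "(\<integral>y. phi y \<partial>pushforward f mu1) - (\<integral>y. phi y \<partial>pushforward f mu2)
      \<le> L * sqrt (c1 * (sqrt (\<integral>x. (norm (f x))\<^sup>2 \<partial>mu1) + sqrt (\<integral>x. (norm (f x))\<^sup>2 \<partial>mu2)) + 2 * c2)
        * (W2sq (pushforward f mu1) (pushforward f mu) powr (1/4)
          + W2sq (pushforward f mu) (pushforward f mu2) powr (1/4))"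
    using regular_integral_diff_le_W2sq_quarter[OF reg pushforward_prob_space(1)[OF mu(1,2) f(1)]
        pushforward_prob_space(1)[OF mu(3,4) f(1)] pushforward_prob_space[OF mu(5,6) f(1)]
        integrable_pushforward_norm_square[OF mu(2) f(1) mom(1)]
        integrable_pushforward_norm_square[OF mu(4) f(1) mom(2)]
        integrable_pushforward_norm_square[OF mu(6) f(1) mom(3)]]
    by (simp add: integral_pushforward_norm_square[OF mu(2) f(1)]
        integral_pushforward_norm_square[OF mu(4) f(1)])
qed

lemma risk_le_risk_add_W2sq_quarter:
  fixes loss :: "'y \<Rightarrow> 'y \<Rightarrow> real" and mu_u mu_s mu :: "'a::polish_space measure"
    and f :: "'a \<Rightarrow> 'b::euclidean_space" and h h_u h_s :: "'a \<Rightarrow> 'y"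
  assumes loss: "(\<lambda>z. loss (fst z) (snd z)) \<in> borel_measurable (Y \<Otimes>\<^sub>M Y)"
      "\<And>a b. 0 \<le> loss a b" "\<And>a b. loss a b = loss b a" "\<And>a b. loss a b \<le> L"
      "\<And>a b c. loss a c \<le> loss a b + loss b c"
    and mu: "prob_space mu_u" "sets mu_u = sets borel" "prob_space mu_s" "sets mu_s = sets borel"
      "prob_space mu" "sets mu = sets borel"
    and h: "h \<in> borel \<rightarrow>\<^sub>M Y" "h_u \<in> borel \<rightarrow>\<^sub>M Y" "h_s \<in> borel \<rightarrow>\<^sub>M Y"
    and f: "f \<in> borel_measurable borel" "inj_on f (msupport mu_u \<union> msupport mu_s)"
    and mom: "integrable mu_u (\<lambda>x. (norm (f x))\<^sup>2)" "integrable mu_s (\<lambda>x. (norm (f x))\<^sup>2)"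
      "integrable mu (\<lambda>x. (norm (f x))\<^sup>2)"
    and reg: "regular c1 c2 (pushforward f mu_u)" "regular c1 c2 (pushforward f mu_s)"
  shows "risk loss mu_u h_u h \<le> risk loss mu_s h_s h
    + L * sqrt (c1 * (sqrt (\<integral>x. (norm (f x))\<^sup>2 \<partial>mu_u) + sqrt (\<integral>x. (norm (f x))\<^sup>2 \<partial>mu_s)) + 2 * c2)
      * (W2sq (pushforward f mu_u) (pushforward f mu) powr (1/4)
         + W2sq (pushforward f mu) (pushforward f mu_s) powr (1/4))
    + min (\<integral>x. loss (h_u x) (h_s x) \<partial>mu_u) (\<integral>x. loss (h_u x) (h_s x) \<partial>mu_s)"
    (is "_ \<le> _ + ?B + _")
proof -
  have meas: "(\<lambda>x. loss (a x) (b x)) \<in> borel_measurable borel"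
    if "a \<in> borel \<rightarrow>\<^sub>M Y" "b \<in> borel \<rightarrow>\<^sub>M Y" for a b :: "'a \<Rightarrow> 'y"
    using measurable_compose[OF measurable_Pair[OF that] loss(1)] by simp
  have int: "integrable M (\<lambda>x. loss (a x) (b x))"
    if "prob_space M" "sets M = sets borel" "a \<in> borel \<rightarrow>\<^sub>M Y" "b \<in> borel \<rightarrow>\<^sub>M Y"
    for M :: "'a measure" and a b :: "'a \<Rightarrow> 'y"
    using meas[OF that(3,4)] loss(2,4)
    by (intro finite_measure.integrable_const_bound[OF prob_space.finite_measure[OF that(1)], where B = L])
      (auto simp: measurable_cong_sets[OF that(2) refl])
  have transfer: "(\<integral>x. loss (a x) (b x) \<partial>mu_u) \<le> (\<integral>x. loss (a x) (b x) \<partial>mu_s) + ?B"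
    if "a \<in> borel \<rightarrow>\<^sub>M Y" "b \<in> borel \<rightarrow>\<^sub>M Y" for a b :: "'a \<Rightarrow> 'y"
    using integral_diff_le_W2sq_quarter[OF mu f mom reg meas[OF that] loss(2,4)] by simp
  have tri: "(\<integral>x. loss (h x) (h_u x) \<partial>M)
      \<le> (\<integral>x. loss (h x) (h_s x) \<partial>M) + (\<integral>x. loss (h_u x) (h_s x) \<partial>M)"
    if "prob_space M" "sets M = sets borel" for M :: "'a measure"
  proof -
    have "(\<integral>x. loss (h x) (h_u x) \<partial>M) \<le> (\<integral>x. loss (h x) (h_s x) + loss (h_u x) (h_s x) \<partial>M)"
      using int[OF that h(1,2)] int[OF that h(1,3)] int[OF that h(2,3)] loss(3,5)
      by (intro integral_mono) (auto intro: order_trans[OF loss(5)])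
    then show ?thesis using int[OF that h(1,3)] int[OF that h(2,3)] by simp
  qed
  have "risk loss mu_u h_u h \<le> risk loss mu_s h_s h + ?B + (\<integral>x. loss (h_u x) (h_s x) \<partial>mu_u)"
    using tri[OF mu(1,2)] transfer[OF h(1,3)] unfolding risk_def by linarith
  moreover have "risk loss mu_u h_u h \<le> risk loss mu_s h_s h + ?B + (\<integral>x. loss (h_u x) (h_s x) \<partial>mu_s)"
    using tri[OF mu(3,4)] transfer[OF h(1,2)] unfolding risk_def by linarith
  ultimately show ?thesis by linarith
qed

lemma le_convex_combination_of_bounds:
  fixes lam a y z :: "'i \<Rightarrow> real"
  assumes I: "finite I" and lam: "sum lam I = 1" "\<And>i. i \<in> I \<Longrightarrow> lam i \<ge> 0"
    and c: "c \<ge> 0" and y: "\<And>i. i \<in> I \<Longrightarrow> y i \<ge> 0"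
    and R: "\<And>i. i \<in> I \<Longrightarrow> R \<le> a i + c * (x + y i powr (1/4)) + z i"
  shows "R \<le> (\<Sum>i\<in>I. lam i * a i) + c * (\<Sum>i\<in>I. lam i * y i) powr (1/4) + c * x + (\<Sum>i\<in>I. lam i * z i)"
proof -
  have "I \<noteq> {}" using lam(1) by auto
  have "R = (\<Sum>i\<in>I. lam i * R)" using lam(1) by (simp add: sum_distrib_right[symmetric])
  also have "\<dots> \<le> (\<Sum>i\<in>I. lam i * (a i + c * (x + y i powr (1/4)) + z i))"
    using R lam(2) by (intro sum_mono mult_left_mono) auto
  also have "\<dots> = (\<Sum>i\<in>I. lam i * a i) + c * (\<Sum>i\<in>I. lam i * y i powr (1/4))
      + c * x * (\<Sum>i\<in>I. lam i) + (\<Sum>i\<in>I. lam i * z i)"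
    by (simp add: sum.distrib sum_distrib_left distrib_left mult_ac)
  also have "\<dots> = (\<Sum>i\<in>I. lam i * a i) + c * (\<Sum>i\<in>I. lam i * y i powr (1/4)) + c * x
      + (\<Sum>i\<in>I. lam i * z i)"
    using lam(1) by simp
  also have "\<dots> \<le> (\<Sum>i\<in>I. lam i * a i) + c * (\<Sum>i\<in>I. lam i * y i) powr (1/4) + c * x + (\<Sum>i\<in>I. lam i * z i)"
    using sum_weighted_powr_quarter_le[OF I \<open>I \<noteq> {}\<close> lam y] c by (simp add: mult_left_mono)
  finally show ?thesis .
qed

theorem corollary1:
  fixes loss :: "'y \<Rightarrow> 'y \<Rightarrow> real" and Y :: "'y measure" and L c1 c2 :: real
    and S :: nat and lam :: "nat \<Rightarrow> real"
    and mu_u :: "'a::euclidean_space measure" and f_u :: "'a \<Rightarrow> 'b::euclidean_space"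
    and g_u :: "'b \<Rightarrow> 'y"
    and mu_s :: "nat \<Rightarrow> 'a measure" and f_s :: "nat \<Rightarrow> 'a \<Rightarrow> 'b" and g_s :: "nat \<Rightarrow> 'b \<Rightarrow> 'y"
    and f :: "'a \<Rightarrow> 'b" and g :: "'b \<Rightarrow> 'y" and mu :: "'a measure"
  assumes loss_meas: "(\<lambda>z. loss (fst z) (snd z)) \<in> borel_measurable (Y \<Otimes>\<^sub>M Y)"
    and loss_nonneg: "\<And>a b. loss a b \<ge> 0"
    and loss_sym: "\<And>a b. loss a b = loss b a"
    and L_pos: "L > 0"
    and loss_bdd: "\<And>a b. loss a b \<le> L"
    and loss_tri: "\<And>a b c. loss a c \<le> loss a b + loss b c"
    \<comment> \<open>domains\<close>
    and mu_u_prob: "prob_space mu_u" and mu_u_sets: "sets mu_u = sets borel"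
    and mu_s_prob: "\<And>s. s \<in> {1..S} \<Longrightarrow> prob_space (mu_s s)"
    and mu_s_sets: "\<And>s. s \<in> {1..S} \<Longrightarrow> sets (mu_s s) = sets borel"
    and f_u_meas: "f_u \<in> borel_measurable borel" and g_u_meas: "g_u \<in> measurable borel Y"
    and f_s_meas: "\<And>s. s \<in> {1..S} \<Longrightarrow> f_s s \<in> borel_measurable borel"
    and g_s_meas: "\<And>s. s \<in> {1..S} \<Longrightarrow> g_s s \<in> measurable borel Y"
    \<comment> \<open>hypothesis h = g o f and arbitrary input distribution mu\<close>
    and f_meas: "f \<in> borel_measurable borel" and g_meas: "g \<in> measurable borel Y"
    and mu_prob: "prob_space mu" and mu_sets: "sets mu = sets borel"
    \<comment> \<open>finite second moments of the representations\<close>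
    and mom_u: "integrable mu_u (\<lambda>x. (norm (f x))\<^sup>2)"
    and mom_s: "\<And>s. s \<in> {1..S} \<Longrightarrow> integrable (mu_s s) (\<lambda>x. (norm (f x))\<^sup>2)"
    and mom_mu: "integrable mu (\<lambda>x. (norm (f x))\<^sup>2)"
    \<comment> \<open>(ii) f invertible on the data manifold\<close>
    and f_inj: "inj_on f (msupport mu_u \<union> (\<Union>s\<in>{1..S}. msupport (mu_s s)))"
    \<comment> \<open>(iii) regularity of the pushforwards\<close>
    and reg_u: "regular c1 c2 (pushforward f mu_u)"
    and reg_s: "\<And>s. s \<in> {1..S} \<Longrightarrow> regular c1 c2 (pushforward f (mu_s s))"
    \<comment> \<open>convex weights\<close>
    and lam_nonneg: "\<And>s. s \<in> {1..S} \<Longrightarrow> lam s \<ge> 0"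
    and lam_sum: "(\<Sum>s\<in>{1..S}. lam s) = 1"
  shows
    "let h = g \<circ> f; h_u = g_u \<circ> f_u; h_s = (\<lambda>s. g_s s \<circ> f_s s);
         sigma = (\<lambda>s. min (\<integral>x. loss (h_u x) (h_s s x) \<partial>mu_u) (\<integral>x. loss (h_u x) (h_s s x) \<partial>(mu_s s)));
         C = Max ((\<lambda>s. sqrt (c1 * (sqrt (\<integral>x. (norm (f x))\<^sup>2 \<partial>mu_u)
                                   + sqrt (\<integral>x. (norm (f x))\<^sup>2 \<partial>(mu_s s))) + 2 * c2)) ` {1..S})
     in risk loss mu_u h_u h
        \<le> (\<Sum>s\<in>{1..S}. lam s * risk loss (mu_s s) (h_s s) h)
          + L * C * (\<Sum>s\<in>{1..S}. lam s * W2sq (pushforward f mu) (pushforward f (mu_s s))) powr (1/4)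
          + L * C * (W2sq (pushforward f mu_u) (pushforward f mu)) powr (1/4)
          + (\<Sum>s\<in>{1..S}. lam s * sigma s)"
proof -
  define C_s where "C_s s = sqrt (c1 * (sqrt (\<integral>x. (norm (f x))\<^sup>2 \<partial>mu_u)
    + sqrt (\<integral>x. (norm (f x))\<^sup>2 \<partial>(mu_s s))) + 2 * c2)" for s
  define C where "C = Max (C_s ` {1..S})"
  have C_s_le: "C_s s \<le> C" if "s \<in> {1..S}" for s
    unfolding C_def using that by (intro Max_ge) auto
  obtain s0 where "s0 \<in> {1..S}" using lam_sum by fastforce
  have "C_s s0 \<ge> 0" using regular_nonneg[OF reg_u] by (simp add: C_s_def)
  then have "L * C \<ge> 0" using C_s_le[OF \<open>s0 \<in> {1..S}\<close>] L_pos by simp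
  have "risk loss mu_u (g_u \<circ> f_u) (g \<circ> f) \<le> risk loss (mu_s s) (g_s s \<circ> f_s s) (g \<circ> f)
      + L * C * (W2sq (pushforward f mu_u) (pushforward f mu) powr (1/4)
        + W2sq (pushforward f mu) (pushforward f (mu_s s)) powr (1/4))
      + min (\<integral>x. loss ((g_u \<circ> f_u) x) ((g_s s \<circ> f_s s) x) \<partial>mu_u)
          (\<integral>x. loss ((g_u \<circ> f_u) x) ((g_s s \<circ> f_s s) x) \<partial>(mu_s s))"
    (is "_ \<le> _ + L * C * ?W + _") if s: "s \<in> {1..S}" for s
  proof -
    have "inj_on f (msupport mu_u \<union> msupport (mu_s s))"
      using s by (intro inj_on_subset[OF f_inj]) auto
    note bound = risk_le_risk_add_W2sq_quarter[OF loss_meas loss_nonneg loss_sym loss_bdd loss_tri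
        mu_u_prob mu_u_sets mu_s_prob[OF s] mu_s_sets[OF s] mu_prob mu_sets
        measurable_comp[OF f_meas g_meas] measurable_comp[OF f_u_meas g_u_meas]
        measurable_comp[OF f_s_meas[OF s] g_s_meas[OF s]] f_meas this mom_u mom_s[OF s] mom_mu
        reg_u reg_s[OF s], folded C_s_def]
    have "L * C_s s * ?W \<le> L * C * ?W"
      using C_s_le[OF s] L_pos by (intro mult_right_mono mult_left_mono) simp_all
    then show ?thesis using bound by linarith
  qed
  then show ?thesis
    unfolding Let_def C_s_def[symmetric] C_def[symmetric]
    by (intro le_convex_combination_of_bounds[OF _ lam_sum lam_nonneg \<open>L * C \<ge> 0\<close>])
      (simp_all add: W2sq_def)
qed

end
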